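(* Let $\mathcal{G}=(\mathcal{V},\mathcal{E})$ be a connected undirected graph on $m$ vertices, decomposed into $M$ pairwise edge-disjoint matchings $\mathcal{G}_1,\dots,\mathcal{G}_M$ (so $\mathcal{E}=\bigcup_{j}\mathcal{E}_j$, $\mathcal{E}_i\cap\mathcal{E}_j=\varnothing$ for $i\neq j$), with Laplacians $\mathbf{L}_1,\dots,\mathbf{L}_M$. Let $C_b>0$ be a communication budget and let $(p_1,\dots,p_M)$ be an optimal solution of the convex problem $$\max_{p_1,\dots,p_M}\ \lambda_2\Big(\sum_{j=1}^M p_j\mathbf{L}_j\Big)\quad\text{s.t.}\quad \sum_{j=1}^M p_j\le C_b M,\quad 0\le p_j\le 1\ \ \forall j.$$ For $k=1,2,\dots$ let $\mathsf{B}_j^{(k)}$ be independent Bernoulli random variables with $\Pr[\mathsf{B}_j^{(k)}=1]=p_j$ (independent across $j$ and $k$), let $\mathbf{L}^{(k)}=\sum_{j=1}^M \mathsf{B}_j^{(k)}\mathbf{L}_j$, and for a real parameter $\alpha$ let $\mathbf{W}^{(k)}=\mathbf{I}-\alpha\mathbf{L}^{(k)}$. Define $\rho=\big\|\mathbb{E}[\mathbf{W}^{(k)\top}\mathbf{W}^{(k)}]-\tfrac{1}{m}\mathbf{1}\mathbf{1}^\top\big\|_2$ (spectral norm). Then there exists a range (a nonempty interval) of values of $\alpha$ for which $\rho<1$. Moreover, the value of $\alpha$ (minimizing $\rho$) can be obtained by solving the semidefinite program $$\min_{\rho,\alpha,\beta}\ \rho\quad\text{s.t.}\quad \alpha^2-\beta\le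 0,\qquad \mathbf{I}-2\alpha\overline{\mathbf{L}}+\beta\big[\overline{\mathbf{L}}^2+2\widetilde{\mathbf{L}}\big]-\tfrac{1}{m}\mathbf{1}\mathbf{1}^\top\preceq\rho\mathbf{I},$$ where $\beta$ is an auxiliary variable, $\overline{\mathbf{L}}=\sum_{j=1}^M p_j\mathbf{L}_j$ and $\widetilde{\mathbf{L}}=\sum_{j=1}^M p_j(1-p_j)\mathbf{L}_j$.
   Context: The Laplacian of a graph on vertex set $\{1,\dots,m\}$ is $\mathrm{diag}(d_1,\dots,d_m)-\mathbf{A}$, with $\mathbf{A}$ the adjacency matrix and $d_i$ the degrees; the Laplacian of a subgraph $\mathcal{G}_j=(\mathcal{V},\mathcal{E}_j)$ is taken on the full vertex set. $\lambda_2(\cdot)$ denotes the second smallest eigenvalue. A matching is a subgraph in which each vertex is incident with at most one edge. $\mathbf{1}$ is the all-ones vector in $\mathbb{R}^m$, and $\|\cdot\|_2$ is the matrix operator (spectral) norm. The procedure generating $\mathbf{L}^{(k)}$ (decomposition into matchings, activation probabilities from the optimization problem, independent Bernoulli activation) is the MATCHA scheme. *)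

theory Defs
  imports "HOL-Analysis.Analysis" "HOL-Library.Multiset"
begin

text \<open>Vertices are the elements of a finite type 'n, so m = CARD('n).
  Undirected edges are 2-element vertex sets.\<close>

definition graph_edges :: "'n set set \<Rightarrow> bool" where
  "graph_edges E \<longleftrightarrow> (\<forall>e\<in>E. card e = 2)"

definition connected_graph :: "('n::finite) set set \<Rightarrow> bool" where
  "connected_graph E \<longleftrightarrow> (\<forall>u v. (\<lambda>x y. {x, y} \<in> E)\<^sup>*\<^sup>* u v)"

definition is_matching :: "'n set set \<Rightarrow> bool" where
  "is_matching F \<longleftrightarrow> (\<forall>v. card {e\<in>F. v \<in> e} \<le> 1)"

definition laplacian :: "('n::finite) set set \<Rightarrow> real^'n^'n" where
  "laplacian F = (\<chi> i j. if i = j then real (card {e\<in>F. i \<in> e})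
                          else if {i, j} \<in> F then -1 else 0)"

text \<open>Eigenvalues of a real matrix, counted with (geometric) multiplicity;
  for symmetric matrices this is the usual multiset of eigenvalues.\<close>
definition eigenvalue_mset :: "real^'n^'n \<Rightarrow> real multiset" where
  "eigenvalue_mset A =
     (\<Sum>l\<in>{l. \<exists>x. x \<noteq> 0 \<and> A *v x = l *\<^sub>R x}.
        replicate_mset (dim {x. A *v x = l *\<^sub>R x}) l)"

definition lambda2 :: "real^'n^'n \<Rightarrow> real" where
  "lambda2 A = sorted_list_of_multiset (eigenvalue_mset A) ! 1"

definition psd_le :: "real^'n^'n \<Rightarrow> real^'n^'n \<Rightarrow> bool" where
  "psd_le A B \<longleftrightarrow> (\<forall>x. 0 \<le> x \<bullet> ((B - A) *v x))"

definition spec_norm :: "real^'n^'n \<Rightarrow> real" where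
  "spec_norm A = onorm (\<lambda>x. A *v x)"

definition ones_mat :: "real^'n^'n" where
  "ones_mat = (\<chi> i j. 1)"

definition matcha_feasible :: "nat \<Rightarrow> real \<Rightarrow> (nat \<Rightarrow> real) \<Rightarrow> bool" where
  "matcha_feasible M Cb p \<longleftrightarrow>
     (\<Sum>j<M. p j) \<le> Cb * real M \<and> (\<forall>j<M. 0 \<le> p j \<and> p j \<le> 1)"

definition matcha_optimal ::
  "nat \<Rightarrow> (nat \<Rightarrow> real^'n^'n) \<Rightarrow> real \<Rightarrow> (nat \<Rightarrow> real) \<Rightarrow> bool" where
  "matcha_optimal M L Cb p \<longleftrightarrow> matcha_feasible M Cb p \<and>
     (\<forall>q. matcha_feasible M Cb q \<longrightarrow>
        lambda2 (\<Sum>j<M. q j *\<^sub>R L j) \<le> lambda2 (\<Sum>j<M. p j *\<^sub>R L j))"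

text \<open>E[W^T W] for W = I - alpha L, L = sum_j B_j L_j with independent
  B_j ~ Bernoulli(p_j): written out as the finite sum over all outcomes.\<close>
definition expected_WtW ::
  "nat \<Rightarrow> (nat \<Rightarrow> real^'n^'n) \<Rightarrow> (nat \<Rightarrow> real) \<Rightarrow> real \<Rightarrow> real^'n^'n" where
  "expected_WtW M L p \<alpha> =
     (\<Sum>b\<in>PiE {..<M} (\<lambda>_. {0, 1::real}).
        (\<Prod>j<M. if b j = 1 then p j else 1 - p j) *\<^sub>R
        (let W = mat 1 - \<alpha> *\<^sub>R (\<Sum>j<M. b j *\<^sub>R L j) in transpose W ** W))"

definition matcha_rho ::
  "nat \<Rightarrow> (nat \<Rightarrow> real^'n^'n) \<Rightarrow> (nat \<Rightarrow> real) \<Rightarrow> real \<Rightarrow> real" where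
  "matcha_rho M L p \<alpha> =
     spec_norm (expected_WtW M L p \<alpha> - (1 / real CARD('n)) *\<^sub>R ones_mat)"

definition sdp_feasible ::
  "nat \<Rightarrow> (nat \<Rightarrow> real^'n^'n) \<Rightarrow> (nat \<Rightarrow> real) \<Rightarrow> real \<Rightarrow> real \<Rightarrow> real \<Rightarrow> bool" where
  "sdp_feasible M L p r \<alpha> \<beta> \<longleftrightarrow>
     (let Lbar = (\<Sum>j<M. p j *\<^sub>R L j);
          Ltil = (\<Sum>j<M. (p j * (1 - p j)) *\<^sub>R L j)
      in \<alpha>^2 - \<beta> \<le> 0 \<and>
         psd_le (mat 1 - (2 * \<alpha>) *\<^sub>R Lbar + \<beta> *\<^sub>R (Lbar ** Lbar + 2 *\<^sub>R Ltil)
                  - (1 / real CARD('n)) *\<^sub>R ones_mat)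
                (r *\<^sub>R mat 1))"

definition sdp_optimal ::
  "nat \<Rightarrow> (nat \<Rightarrow> real^'n^'n) \<Rightarrow> (nat \<Rightarrow> real) \<Rightarrow> real \<Rightarrow> real \<Rightarrow> real \<Rightarrow> bool" where
  "sdp_optimal M L p r \<alpha> \<beta> \<longleftrightarrow> sdp_feasible M L p r \<alpha> \<beta> \<and>
     (\<forall>r' \<alpha>' \<beta>'. sdp_feasible M L p r' \<alpha>' \<beta>' \<longrightarrow> r \<le> r')"

end

theory Submission
  imports Defs "HOL-Real_Asymp.Real_Asymp"
begin

text \<open>Each \<open>L\<^sub>j\<close> is the Laplacian of a matching, so \<open>L\<^sub>j\<^sup>2 = 2 L\<^sub>j\<close>, and independence of the
  activations gives \<open>E[W\<^sup>T W] = I - 2\<alpha> L + \<alpha>\<^sup>2 (L\<^sup>2 + 2 L')\<close> with \<open>L = \<Sum> p\<^sub>j L\<^sub>j\<close> and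
  \<open>L' = \<Sum> p\<^sub>j (1 - p\<^sub>j) L\<^sub>j\<close>.  After subtracting \<open>1 1\<^sup>T / m\<close> this matrix \<open>S(\<alpha>)\<close> is positive
  semidefinite, so \<open>\<rho>(\<alpha>) = \<parallel>S(\<alpha>)\<parallel>\<close> is the least \<open>r\<close> with \<open>S(\<alpha>) \<preceq> r I\<close>; since
  \<open>L\<^sup>2 + 2 L' \<succeq> 0\<close>, relaxing \<open>\<alpha>\<^sup>2\<close> to \<open>\<beta> \<ge> \<alpha>\<^sup>2\<close> only increases the matrix, so the SDP
  computes \<open>min\<^sub>\<alpha> \<rho>(\<alpha>)\<close>, which exists as \<open>\<rho>\<close> is continuous and either constant or
  coercive.  Comparing \<open>p\<close> with the feasible uniform probabilities, optimality and
  connectivity give \<open>\<lambda>\<^sub>2(L) > 0\<close>, so \<open>L \<succeq> \<mu> I\<close> on \<open>1\<^sup>\<bottom>\<close> for some \<open>\<mu> > 0\<close>.  There the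
  form of \<open>S(\<alpha>)\<close> is at most \<open>1 - 2\<alpha>\<mu> + O(\<alpha>\<^sup>2)\<close>, whence \<open>\<rho>(\<alpha>) < 1\<close> for small \<open>\<alpha> > 0\<close>.\<close>

section \<open>Symmetric matrices, quadratic forms and the operator norm\<close>

definition symmetric_matrix :: "real^'n^'n \<Rightarrow> bool" where
  "symmetric_matrix A \<longleftrightarrow> transpose A = A"

lemma symmetric_matrix_inner:
  assumes "symmetric_matrix A"
  shows "(A *v x) \<bullet> y = x \<bullet> (A *v y)"
proof -
  have "A *v x = x v* A"
    using assms unfolding symmetric_matrix_def by (metis transpose_matrix_vector)
  thus ?thesis by (simp add: dot_lmul_matrix)
qed

lemma symmetric_matrix_add: "symmetric_matrix A \<Longrightarrow> symmetric_matrix B \<Longrightarrow> symmetric_matrix (A + B)"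
  and symmetric_matrix_diff: "symmetric_matrix A \<Longrightarrow> symmetric_matrix B \<Longrightarrow> symmetric_matrix (A - B)"
  and symmetric_matrix_scaleR: "symmetric_matrix A \<Longrightarrow> symmetric_matrix (c *\<^sub>R A)"
  and symmetric_matrix_zero: "symmetric_matrix 0"
  and symmetric_matrix_mat: "symmetric_matrix (mat c)"
  by (simp_all add: symmetric_matrix_def transpose_def vec_eq_iff mat_def)

lemma symmetric_matrix_sum:
  "(\<And>s. s \<in> S \<Longrightarrow> symmetric_matrix (f s)) \<Longrightarrow> symmetric_matrix (\<Sum>s\<in>S. f s)"
  by (induct S rule: infinite_finite_induct) (auto intro!: symmetric_matrix_add symmetric_matrix_zero)

lemma symmetric_matrix_mult_self: "symmetric_matrix A \<Longrightarrow> symmetric_matrix (A ** A)"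
  by (simp add: symmetric_matrix_def matrix_transpose_mul)

lemma quadratic_form_scaleR:
  fixes A :: "real^'n^'n"
  shows "(c *\<^sub>R x) \<bullet> (A *v (c *\<^sub>R x)) = c^2 * (x \<bullet> (A *v x))"
  by (simp add: matrix_vector_mult_scaleR power2_eq_square)

lemma psd_cauchy_schwarz:
  assumes "symmetric_matrix A" "\<And>z. 0 \<le> z \<bullet> (A *v z)"
  shows "(x \<bullet> (A *v y))^2 \<le> (x \<bullet> (A *v x)) * (y \<bullet> (A *v y))"
proof -
  define a b c where "a = x \<bullet> (A *v x)" and "b = x \<bullet> (A *v y)" and "c = y \<bullet> (A *v y)"
  have q: "0 \<le> a + 2*t*b + t^2*c" for t
  proof -
    have "0 \<le> (x + t *\<^sub>R y) \<bullet> (A *v (x + t *\<^sub>R y))" by (rule assms(2))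
    also have "\<dots> = a + 2*t*b + t^2*c"
      using symmetric_matrix_inner[OF assms(1), of y x]
      by (simp add: a_def b_def c_def matrix_vector_right_distrib matrix_vector_mult_scaleR
           inner_add_left inner_add_right power2_eq_square algebra_simps inner_commute)
    finally show ?thesis .
  qed
  have "c \<ge> 0" using assms(2) c_def by simp
  show ?thesis
  proof (cases "c = 0")
    case True
    have "b = 0"
    proof (rule ccontr)
      assume "b \<noteq> 0"
      have "0 \<le> a + 2*(-(a+1)/(2*b))*b + (-(a+1)/(2*b))^2*c" by (rule q)
      then show False using \<open>b \<noteq> 0\<close> True by (simp add: field_simps)
    qed
    thus ?thesis using True by (simp flip: a_def b_def c_def)
  next
    case False
    hence "c > 0" using \<open>c \<ge> 0\<close> by simp
    have "0 \<le> a + 2*(-b/c)*b + (-b/c)^2*c" by (rule q)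
    also have "a + 2*(-b/c)*b + (-b/c)^2*c = (a*c - b^2)/c"
      using False by (simp add: field_simps power2_eq_square)
    finally have "0 \<le> a*c - b^2" using \<open>c > 0\<close> by (simp add: zero_le_divide_iff)
    thus ?thesis by (simp add: a_def b_def c_def)
  qed
qed

lemma psd_quadratic_form_eq_0_imp:
  assumes "symmetric_matrix A" "\<And>z. 0 \<le> z \<bullet> (A *v z)" "x \<bullet> (A *v x) = 0"
  shows "A *v x = 0"
proof -
  have "((A *v x) \<bullet> (A *v x))^2 \<le> ((A *v x) \<bullet> (A *v (A *v x))) * (x \<bullet> (A *v x))"
    by (rule psd_cauchy_schwarz[OF assms(1,2)])
  thus ?thesis using assms(3) by simp
qed

lemma quadratic_form_le_onorm:
  fixes A :: "real^'n^'n"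
  shows "x \<bullet> (A *v x) \<le> onorm ((*v) A) * (norm x)^2"
proof -
  have "x \<bullet> (A *v x) \<le> norm x * norm (A *v x)" by (rule norm_cauchy_schwarz)
  also have "\<dots> \<le> norm x * (onorm ((*v) A) * norm x)"
    by (intro mult_left_mono onorm[OF matrix_vector_mul_bounded_linear]) simp
  finally show ?thesis by (simp add: power2_eq_square algebra_simps)
qed

text \<open>Cauchy--Schwarz for the semidefinite form bounds \<open>|A x|\<^sup>2 = x\<^sup>T A (A x)\<close> by the form at \<open>x\<close>
  and at \<open>A x\<close>.\<close>

lemma onorm_le_of_quadratic_form:
  fixes A :: "real^'n^'n"
  assumes sym: "symmetric_matrix A" and psd: "\<And>z. 0 \<le> z \<bullet> (A *v z)"
    and bound: "\<And>z. z \<bullet> (A *v z) \<le> c * (norm z)^2"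
  shows "onorm ((*v) A) \<le> c"
proof (rule onorm_le)
  fix x
  have c: "0 \<le> c"
    using psd[of "axis undefined 1"] bound[of "axis undefined 1"] by simp
  define y where "y = A *v x"
  have e: "(norm y)^2 = x \<bullet> (A *v y)"
    using symmetric_matrix_inner[OF sym, of x y] by (simp add: y_def power2_norm_eq_inner)
  have "((norm y)^2)^2 \<le> (x \<bullet> (A *v x)) * (y \<bullet> (A *v y))"
    using psd_cauchy_schwarz[OF sym psd, of x y] e by simp
  also have "\<dots> \<le> (c * (norm x)^2) * (c * (norm y)^2)"
    by (intro mult_mono bound psd mult_nonneg_nonneg c zero_le_power2)
  finally have h: "(norm y)^2 * (norm y)^2 \<le> (c * norm x)^2 * (norm y)^2"
    by (simp add: power2_eq_square algebra_simps)
  show "norm (A *v x) \<le> c * norm x"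
  proof (cases "y = 0")
    case True
    thus ?thesis using c by (simp flip: y_def)
  next
    case False
    hence "(norm y)^2 > 0" by simp
    hence "(norm y)^2 \<le> (c * norm x)^2"
      using h by (simp only: mult_le_cancel_right_pos)
    hence "norm y \<le> c * norm x"
      by (rule power2_le_imp_le) (simp add: c)
    thus ?thesis by (simp add: y_def)
  qed
qed

lemma onorm_matrix_lipschitz:
  fixes A B :: "real^'n^'m"
  shows "\<bar>onorm ((*v) A) - onorm ((*v) B)\<bar> \<le> real CARD('m) * real CARD('n) * norm (A - B)"
proof -
  have tri: "onorm ((*v) A) \<le> onorm ((*v) B) + onorm ((*v) (A - B))" for A B :: "real^'n^'m"
  proof -
    have "onorm (\<lambda>x. B *v x + (A - B) *v x) \<le> onorm ((*v) B) + onorm ((*v) (A - B))"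
      by (rule onorm_triangle[OF matrix_vector_mul_bounded_linear matrix_vector_mul_bounded_linear])
    moreover have "(\<lambda>x. B *v x + (A - B) *v x) = (*v) A"
      by (simp add: fun_eq_iff matrix_vector_mult_diff_rdistrib)
    ultimately show ?thesis by simp
  qed
  have bound: "onorm ((*v) D) \<le> real CARD('m) * real CARD('n) * norm D" for D :: "real^'n^'m"
  proof (rule onorm_le_matrix_component)
    fix i j
    have "\<bar>D $ i $ j\<bar> \<le> norm (D $ i)" by (rule component_le_norm_cart)
    also have "\<dots> \<le> norm D" by (rule Finite_Cartesian_Product.norm_nth_le)
    finally show "\<bar>D $ i $ j\<bar> \<le> norm D" .
  qed
  have "onorm ((*v) A) - onorm ((*v) B) \<le> real CARD('m) * real CARD('n) * norm (A - B)"
    using tri[of A B] bound[of "A - B"] by linarith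
  moreover have "- (onorm ((*v) A) - onorm ((*v) B)) \<le> real CARD('m) * real CARD('n) * norm (A - B)"
    using tri[of B A] bound[of "B - A"] unfolding norm_minus_commute[of B A] by linarith
  ultimately show ?thesis by (rule abs_leI)
qed

lemma continuous_on_onorm_matrix: "continuous_on S (\<lambda>A :: real^'n^'m. onorm ((*v) A))"
proof (rule lipschitz_on_continuous_on)
  show "(real CARD('m) * real CARD('n))-lipschitz_on S (\<lambda>A :: real^'n^'m. onorm ((*v) A))"
    by (rule lipschitz_onI) (simp_all add: dist_real_def dist_norm onorm_matrix_lipschitz)
qed

lemma continuous_attains_inf_coercive:
  fixes f :: "real \<Rightarrow> real"
  assumes "continuous_on UNIV f" "filterlim f at_top at_infinity"
  shows "\<exists>x. \<forall>y. f x \<le> f y"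
proof -
  have "eventually (\<lambda>y. f 0 < f y) at_infinity"
    using assms(2) unfolding filterlim_at_top_dense by blast
  then obtain R where R: "\<And>y. R \<le> norm y \<Longrightarrow> f 0 < f y"
    unfolding eventually_at_infinity by blast
  have "continuous_on (cball 0 \<bar>R\<bar>) f"
    by (rule continuous_on_subset[OF assms(1)]) simp
  hence "\<exists>x\<in>cball 0 \<bar>R\<bar>. \<forall>y\<in>cball 0 \<bar>R\<bar>. f x \<le> f y"
    by (intro continuous_attains_inf compact_cball) simp_all
  then obtain x where x: "\<And>y. y \<in> cball 0 \<bar>R\<bar> \<Longrightarrow> f x \<le> f y"
    by blast
  have "f x \<le> f y" for y
  proof (cases "y \<in> cball 0 \<bar>R\<bar>")
    case True
    thus ?thesis by (rule x)
  next
    case False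
    hence "R \<le> norm y" by simp
    hence "f 0 < f y" by (rule R)
    moreover have "f x \<le> f 0" by (rule x) simp
    ultimately show ?thesis by simp
  qed
  thus ?thesis by blast
qed

section \<open>Eigenvectors orthogonal to a kernel vector\<close>

lemma span_singleton_orthogonal_eq_0:
  fixes x v :: "'a::real_inner"
  assumes "x \<in> span {v}" "v \<bullet> x = 0"
  shows "x = 0"
proof -
  obtain c where x: "x = c *\<^sub>R v" using assms(1) by (auto simp: span_singleton)
  hence "c * (v \<bullet> v) = 0" using assms(2) by simp
  thus ?thesis using x by auto
qed

lemma inner_diff_projection_eq_0:
  fixes x v :: "'a::real_inner"
  assumes "v \<noteq> 0"
  shows "v \<bullet> (x - ((v \<bullet> x) / (v \<bullet> v)) *\<^sub>R v) = 0"
  using assms by (simp add: inner_diff_right)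

lemma quadratic_form_shift_kernel:
  fixes A :: "real^'n^'n"
  assumes "symmetric_matrix A" "A *v v = 0"
  shows "(x - c *\<^sub>R v) \<bullet> (A *v (x - c *\<^sub>R v)) = x \<bullet> (A *v x)"
proof -
  have "v \<bullet> (A *v x) = 0"
    using symmetric_matrix_inner[OF assms(1), of v x] assms(2) by simp
  thus ?thesis using assms(2)
    by (simp add: matrix_vector_mult_diff_distrib matrix_vector_mult_scaleR inner_diff_left)
qed

lemma quadratic_nonpos_imp_linear_coeff_eq_0:
  fixes b c :: real
  assumes "0 \<le> b" "\<And>t. t * b + t^2 * c \<le> 0"
  shows "b = 0"
proof (rule ccontr)
  assume "b \<noteq> 0"
  hence "0 < b" using assms(1) by simp
  define t where "t = b / (\<bar>c\<bar> + 1)"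
  have "0 < t" using \<open>0 < b\<close> by (simp add: t_def)
  have "t * \<bar>c\<bar> < b"
    using \<open>0 < b\<close> by (simp add: t_def field_simps)
  moreover have "t * (- \<bar>c\<bar>) \<le> t * c" using \<open>0 < t\<close> by (intro mult_left_mono) auto
  ultimately have "0 < b + t * c" by linarith
  hence "0 < t * (b + t * c)" using \<open>0 < t\<close> by simp
  thus False using assms(2)[of t] by (simp add: power2_eq_square algebra_simps)
qed

text \<open>A maximiser \<open>x\<close> of the form on the unit sphere of the invariant subspace \<open>v\<^sup>\<bottom>\<close> is an
  eigenvector: perturbing \<open>x\<close> along \<open>z = A x - \<lambda> x \<in> v\<^sup>\<bottom>\<close> changes the Rayleigh quotient at
  first order by \<open>2 t |z|\<^sup>2\<close>.\<close>

lemma maximiser_quadratic_form_eigenvector: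
  fixes A :: "real^'n^'n"
  assumes sym: "symmetric_matrix A" and Av: "A *v v = 0"
    and x: "v \<bullet> x = 0" "x \<bullet> x = 1"
    and max: "\<And>y. v \<bullet> y = 0 \<Longrightarrow> y \<bullet> (A *v y) \<le> (x \<bullet> (A *v x)) * (y \<bullet> y)"
  shows "A *v x = (x \<bullet> (A *v x)) *\<^sub>R x"
proof -
  define lam where "lam = x \<bullet> (A *v x)"
  define z where "z = A *v x - lam *\<^sub>R x"
  have oz: "v \<bullet> z = 0"
    using symmetric_matrix_inner[OF sym, of v x] Av x(1) by (simp add: z_def inner_diff_right)
  have "(A *v x) \<bullet> x = lam" by (simp add: lam_def inner_commute)
  hence zx: "z \<bullet> x = 0" using x(2) by (simp add: z_def inner_diff_left)
  have zAx: "z \<bullet> (A *v x) = z \<bullet> z"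
    using zx by (simp add: z_def inner_diff_right inner_diff_left algebra_simps inner_commute)
  have "t * (2 * (z \<bullet> z)) + t^2 * (z \<bullet> (A *v z) - lam * (z \<bullet> z)) \<le> 0" for t
  proof -
    have "v \<bullet> (x + t *\<^sub>R z) = 0" using x(1) oz by (simp add: inner_add_right)
    hence "(x + t *\<^sub>R z) \<bullet> (A *v (x + t *\<^sub>R z)) \<le> lam * ((x + t *\<^sub>R z) \<bullet> (x + t *\<^sub>R z))"
      unfolding lam_def by (rule max)
    moreover have "(x + t *\<^sub>R z) \<bullet> (A *v (x + t *\<^sub>R z)) = lam + 2*t*(z \<bullet> z) + t^2 * (z \<bullet> (A *v z))"
      using symmetric_matrix_inner[OF sym, of z x] zAx
      by (simp add: lam_def matrix_vector_right_distrib matrix_vector_mult_scaleR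
           inner_add_left inner_add_right power2_eq_square algebra_simps inner_commute)
    moreover have "lam * ((x + t *\<^sub>R z) \<bullet> (x + t *\<^sub>R z)) = lam + t^2 * (lam * (z \<bullet> z))"
      using x(2) zx by (simp add: inner_add_left inner_add_right power2_eq_square inner_commute
          algebra_simps)
    moreover have "t^2 * (z \<bullet> (A *v z) - lam * (z \<bullet> z)) = t^2 * (z \<bullet> (A *v z)) - t^2 * (lam * (z \<bullet> z))"
      by (simp add: right_diff_distrib)
    ultimately show ?thesis by linarith
  qed
  hence "2 * (z \<bullet> z) = 0" by (intro quadratic_nonpos_imp_linear_coeff_eq_0) simp_all
  thus ?thesis by (simp add: z_def lam_def)
qed

lemma symmetric_matrix_eigenvector_orthogonal:
  fixes A :: "real^'n^'n"
  assumes sym: "symmetric_matrix A" and Av: "A *v v = 0"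
    and y0: "y0 \<noteq> 0" "v \<bullet> y0 = 0"
  shows "\<exists>y l. y \<noteq> 0 \<and> v \<bullet> y = 0 \<and> A *v y = l *\<^sub>R y"
proof -
  define S :: "(real^'n) set" where "S = sphere 0 1 \<inter> {y. v \<bullet> y = 0}"
  have "compact S"
    unfolding S_def by (intro compact_Int_closed compact_sphere closed_hyperplane)
  moreover have "(1 / norm y0) *\<^sub>R y0 \<in> S"
    using y0 by (simp add: S_def)
  hence "S \<noteq> {}" by auto
  moreover have "continuous_on S (\<lambda>y. y \<bullet> (A *v y))"
    by (intro continuous_intros matrix_vector_mult_linear_continuous_on)
  ultimately obtain x where xS: "x \<in> S" and xmax: "\<And>y. y \<in> S \<Longrightarrow> y \<bullet> (A *v y) \<le> x \<bullet> (A *v x)"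
    using continuous_attains_sup by metis
  have x: "v \<bullet> x = 0" "x \<bullet> x = 1" using xS by (auto simp: S_def dot_square_norm)
  have "y \<bullet> (A *v y) \<le> (x \<bullet> (A *v x)) * (y \<bullet> y)" if "v \<bullet> y = 0" for y
  proof (cases "y = 0")
    case True thus ?thesis by simp
  next
    case False
    have "(1 / norm y) *\<^sub>R y \<in> S" using False that by (simp add: S_def)
    hence "(1 / norm y)^2 * (y \<bullet> (A *v y)) \<le> x \<bullet> (A *v x)"
      unfolding quadratic_form_scaleR[symmetric] by (rule xmax)
    thus ?thesis using False by (simp add: power_divide divide_le_eq power2_norm_eq_inner)
  qed
  hence "A *v x = (x \<bullet> (A *v x)) *\<^sub>R x"
    by (rule maximiser_quadratic_form_eigenvector[OF sym Av x])
  moreover have "x \<noteq> 0" using x(2) by auto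
  ultimately show ?thesis using x(1) by blast
qed

text \<open>By compactness the minimum of the form on the unit sphere of \<open>v\<^sup>\<bottom>\<close> is attained, and it
  cannot be \<open>0\<close> since a null vector of a semidefinite form lies in the kernel.\<close>

lemma psd_coercive_on_orthogonal_complement:
  fixes A :: "real^'n^'n"
  assumes sym: "symmetric_matrix A" and psd: "\<And>x. 0 \<le> x \<bullet> (A *v x)"
    and ker: "\<And>x. A *v x = 0 \<Longrightarrow> x \<in> span {v}"
  shows "\<exists>\<mu>>0. \<forall>y. v \<bullet> y = 0 \<longrightarrow> \<mu> * (y \<bullet> y) \<le> y \<bullet> (A *v y)"
proof -
  define S :: "(real^'n) set" where "S = sphere 0 1 \<inter> {y. v \<bullet> y = 0}"
  have inS: "(1 / norm y) *\<^sub>R y \<in> S" if "y \<noteq> 0" "v \<bullet> y = 0" for y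
    using that by (simp add: S_def)
  show ?thesis
  proof (cases "S = {}")
    case True
    have "1 * (y \<bullet> y) \<le> y \<bullet> (A *v y)" if "v \<bullet> y = 0" for y
    proof -
      have "y = 0" using inS[of y] that True by auto
      thus ?thesis by simp
    qed
    thus ?thesis by (intro exI[of _ 1]) simp
  next
    case False
    have "compact S"
      unfolding S_def by (intro compact_Int_closed compact_sphere closed_hyperplane)
    moreover have "continuous_on S (\<lambda>y. y \<bullet> (A *v y))"
      by (intro continuous_intros matrix_vector_mult_linear_continuous_on)
    ultimately obtain y0 where y0S: "y0 \<in> S"
      and ymin: "\<And>y. y \<in> S \<Longrightarrow> y0 \<bullet> (A *v y0) \<le> y \<bullet> (A *v y)"
      using continuous_attains_inf False by metis
    define \<mu> where "\<mu> = y0 \<bullet> (A *v y0)"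
    have "\<mu> > 0"
    proof (rule ccontr)
      assume "\<not> \<mu> > 0"
      hence "y0 \<bullet> (A *v y0) = 0" using psd[of y0] by (simp add: \<mu>_def)
      hence "A *v y0 = 0" by (rule psd_quadratic_form_eq_0_imp[OF sym psd])
      hence "y0 = 0"
        using ker y0S span_singleton_orthogonal_eq_0 by (auto simp: S_def)
      thus False using y0S by (simp add: S_def)
    qed
    moreover have "\<mu> * (y \<bullet> y) \<le> y \<bullet> (A *v y)" if "v \<bullet> y = 0" for y
    proof (cases "y = 0")
      case True thus ?thesis by simp
    next
      case False
      have "\<mu> \<le> (1 / norm y)^2 * (y \<bullet> (A *v y))"
        unfolding \<mu>_def quadratic_form_scaleR[symmetric] by (rule ymin[OF inS[OF False that]])
      thus ?thesis using False by (simp add: power_divide le_divide_eq power2_norm_eq_inner)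
    qed
    ultimately show ?thesis by blast
  qed
qed

section \<open>The second smallest eigenvalue\<close>

definition eigenvalue_set :: "real^'n^'n \<Rightarrow> real set" where
  "eigenvalue_set A = {l. \<exists>x. x \<noteq> 0 \<and> A *v x = l *\<^sub>R x}"

text \<open>Eigenvectors of distinct eigenvalues are orthogonal, hence independent, so there are at
  most \<open>CARD('n)\<close> eigenvalues.\<close>

lemma finite_eigenvalue_set:
  fixes A :: "real^'n^'n"
  assumes "symmetric_matrix A"
  shows "finite (eigenvalue_set A)"
proof -
  define f where "f l = (SOME x. x \<noteq> 0 \<and> A *v x = l *\<^sub>R x)" for l
  have f: "f l \<noteq> 0 \<and> A *v f l = l *\<^sub>R f l" if "l \<in> eigenvalue_set A" for l
    using that unfolding eigenvalue_set_def f_def by (metis (mono_tags, lifting) mem_Collect_eq someI_ex)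
  have inj: "inj_on f (eigenvalue_set A)"
  proof (rule inj_onI)
    fix l1 l2 assume l: "l1 \<in> eigenvalue_set A" "l2 \<in> eigenvalue_set A" "f l1 = f l2"
    hence "l1 *\<^sub>R f l1 = l2 *\<^sub>R f l1" using f by metis
    thus "l1 = l2" using f[OF l(1)] by (simp add: scaleR_cancel_right)
  qed
  have "pairwise orthogonal (f ` eigenvalue_set A)"
  proof (unfold pairwise_def, intro ballI impI)
    fix x y assume "x \<in> f ` eigenvalue_set A" "y \<in> f ` eigenvalue_set A" "x \<noteq> y"
    then obtain l1 l2 where l: "l1 \<in> eigenvalue_set A" "l2 \<in> eigenvalue_set A" "x = f l1" "y = f l2"
      by auto
    with \<open>x \<noteq> y\<close> have "l1 \<noteq> l2" by auto
    have "l1 * (x \<bullet> y) = (A *v x) \<bullet> y" using f[OF l(1)] l(3) by simp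
    also have "\<dots> = x \<bullet> (A *v y)" by (rule symmetric_matrix_inner[OF assms])
    also have "\<dots> = l2 * (x \<bullet> y)" using f[OF l(2)] l(4) by simp
    finally have "(l1 - l2) * (x \<bullet> y) = 0" by (simp add: algebra_simps)
    thus "orthogonal x y" using \<open>l1 \<noteq> l2\<close> by (simp add: orthogonal_def)
  qed
  moreover have "0 \<notin> f ` eigenvalue_set A" using f by auto
  ultimately have "independent (f ` eigenvalue_set A)"
    using pairwise_orthogonal_independent by blast
  hence "finite (f ` eigenvalue_set A)" by (rule finiteI_independent)
  thus ?thesis using inj finite_imageD by blast
qed

lemma count_eigenvalue_mset:
  fixes A :: "real^'n^'n"
  assumes "symmetric_matrix A"
  shows "count (eigenvalue_mset A) l =
    (if l \<in> eigenvalue_set A then dim {x. A *v x = l *\<^sub>R x} else 0)"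
proof -
  have "count (eigenvalue_mset A) l
      = (\<Sum>a\<in>eigenvalue_set A. count (replicate_mset (dim {x. A *v x = a *\<^sub>R x}) a) l)"
    unfolding eigenvalue_mset_def eigenvalue_set_def by (simp add: count_sum)
  also have "\<dots> = (\<Sum>a\<in>eigenvalue_set A. if l = a then dim {x. A *v x = a *\<^sub>R x} else 0)"
    by (simp add: count_replicate_mset)
  also have "\<dots> = (if l \<in> eigenvalue_set A then dim {x. A *v x = l *\<^sub>R x} else 0)"
    using finite_eigenvalue_set[OF assms] by (simp add: sum.delta)
  finally show ?thesis .
qed

lemma eigenvalue_nonneg_if_psd:
  fixes A :: "real^'n^'n"
  assumes "\<And>z. 0 \<le> z \<bullet> (A *v z)" "l \<in> eigenvalue_set A"
  shows "0 \<le> l"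
proof -
  obtain x where x: "x \<noteq> 0" "A *v x = l *\<^sub>R x"
    using assms(2) by (auto simp: eigenvalue_set_def)
  have "0 \<le> l * (x \<bullet> x)" using assms(1)[of x] x(2) by simp
  moreover have "x \<bullet> x > 0" using x(1) by simp
  ultimately show ?thesis by (simp add: zero_le_mult_iff)
qed

lemma eigenvalue_mset_nonneg_if_psd:
  fixes A :: "real^'n^'n"
  assumes "symmetric_matrix A" "\<And>z. 0 \<le> z \<bullet> (A *v z)"
  shows "\<forall>l\<in>#eigenvalue_mset A. 0 \<le> l"
proof (intro ballI eigenvalue_nonneg_if_psd[OF assms(2)])
  fix l assume "l \<in># eigenvalue_mset A"
  hence "count (eigenvalue_mset A) l \<noteq> 0" by simp
  thus "l \<in> eigenvalue_set A" using count_eigenvalue_mset[OF assms(1), of l] by (simp split: if_splits)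
qed

lemma sorted_list_of_multiset_nth_1_eq_0:
  fixes X :: "real multiset"
  assumes "\<forall>a\<in>#X. 0 \<le> a" "count X 0 \<ge> 2"
  shows "sorted_list_of_multiset X ! 1 = 0"
proof -
  define l where "l = sorted_list_of_multiset X"
  have ml: "mset l = X" and sl: "sorted l"
    unfolding l_def by (simp_all add: sorted_sorted_list_of_multiset)
  have "count (mset l) 0 \<ge> 2" using ml assms by simp
  hence "length l \<ge> 2" by (metis count_le_size size_mset order_trans)
  then obtain a0 a1 r where l: "l = a0 # a1 # r"
    by (metis One_nat_def Suc_1 Suc_le_length_iff)
  have nn: "\<forall>a\<in>set l. 0 \<le> a" using assms(1) ml by auto
  have "a1 \<le> 0"
  proof (rule ccontr)
    assume "\<not> a1 \<le> 0"
    hence "\<forall>y\<in>set r. y > 0" using sl l by auto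
    hence r0: "count (mset r) 0 = 0" by (auto simp: count_eq_zero_iff)
    have "count (mset l) 0 = count (mset r) 0 + (if a0 = 0 then 1 else 0)"
      using l \<open>\<not> a1 \<le> 0\<close> by simp
    hence "count (mset l) 0 \<le> 1" using r0 by simp
    thus False using \<open>count (mset l) 0 \<ge> 2\<close> by simp
  qed
  hence "a1 = 0" using nn l by force
  thus ?thesis using l l_def by simp
qed

lemma sorted_list_of_multiset_nth_1_pos:
  fixes X :: "real multiset"
  assumes "\<forall>a\<in>#X. 0 \<le> a" "count X 0 = 1" "a \<in># X" "a > 0"
  shows "sorted_list_of_multiset X ! 1 > 0"
proof -
  define l where "l = sorted_list_of_multiset X"
  have ml: "mset l = X" and sl: "sorted l"
    unfolding l_def by (simp_all add: sorted_sorted_list_of_multiset)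
  have "0 \<in> set l" "a \<in> set l" using assms ml
    by (metis count_eq_zero_iff one_neq_zero set_mset_mset, metis set_mset_mset)
  hence "card {0, a} \<le> length l" by (metis card_length card_mono List.finite_set order_trans
      empty_subsetI insert_subset)
  hence "length l \<ge> 2" using assms(4) by simp
  then obtain a0 a1 r where l: "l = a0 # a1 # r"
    by (metis One_nat_def Suc_1 Suc_le_length_iff)
  have nn: "\<forall>a\<in>set l. 0 \<le> a" using assms(1) ml by auto
  have "a0 = 0" using sl l nn \<open>0 \<in> set l\<close> by force
  have "a1 \<noteq> 0"
  proof
    assume "a1 = 0"
    hence "count (mset l) 0 \<ge> 2" using l \<open>a0 = 0\<close> by simp
    thus False using ml assms(2) by simp
  qed
  hence "a1 > 0" using nn l by force
  thus ?thesis using l unfolding l_def[symmetric] by simp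
qed

lemma count_eigenvalue_mset_0:
  fixes A :: "real^'n^'n"
  assumes "symmetric_matrix A" "A *v v = 0" "v \<noteq> 0"
  shows "count (eigenvalue_mset A) 0 = dim {x. A *v x = 0}"
proof -
  have "0 \<in> eigenvalue_set A" using assms(2,3) unfolding eigenvalue_set_def by auto
  thus ?thesis using count_eigenvalue_mset[OF assms(1), of 0] by simp
qed

lemma lambda2_eq_0_if_kernel_not_in_span:
  fixes A :: "real^'n^'n"
  assumes sym: "symmetric_matrix A" and psd: "\<And>z. 0 \<le> z \<bullet> (A *v z)"
    and v: "A *v v = 0" "v \<noteq> 0" and x: "A *v x = 0" "x \<notin> span {v}"
  shows "lambda2 A = 0"
proof -
  have "independent {v}"
    using v(2) independent_insertI[of v "{}"] by (simp add: independent_empty)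
  hence "independent {x, v}" by (rule independent_insertI[OF x(2)])
  moreover have "{x, v} \<subseteq> {x. A *v x = 0}" "x \<noteq> v" using x v by (auto simp: span_base)
  ultimately have "2 \<le> dim {x. A *v x = 0}"
    using independent_card_le_dim[of "{x, v}" "{x. A *v x = 0}"] by simp
  thus ?thesis
    unfolding lambda2_def count_eigenvalue_mset_0[OF sym v, symmetric]
    by (rule sorted_list_of_multiset_nth_1_eq_0[OF eigenvalue_mset_nonneg_if_psd[OF sym psd]])
qed

text \<open>For positive semidefinite \<open>A\<close> the eigenvalue \<open>0\<close> is the smallest, so \<open>\<lambda>\<^sub>2(A) > 0\<close> once
  \<open>0\<close> is simple; the vector \<open>y\<^sub>0\<close> excludes dimension one, where \<open>\<lambda>\<^sub>2\<close> is a junk value.\<close>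

lemma lambda2_pos_if_kernel_in_span:
  fixes A :: "real^'n^'n"
  assumes sym: "symmetric_matrix A" and psd: "\<And>z. 0 \<le> z \<bullet> (A *v z)"
    and v: "A *v v = 0" "v \<noteq> 0" and y0: "y0 \<noteq> 0" "v \<bullet> y0 = 0"
    and ker: "\<And>x. A *v x = 0 \<Longrightarrow> x \<in> span {v}"
  shows "0 < lambda2 A"
proof -
  have "{x. A *v x = 0} = span {v}"
    using ker v(1) by (auto simp: span_singleton matrix_vector_mult_scaleR)
  hence count1: "count (eigenvalue_mset A) 0 = 1"
    using count_eigenvalue_mset_0[OF sym v] v(2)
    by (simp add: dim_span independent_insertI dim_eq_card_independent)
  obtain y l where y: "y \<noteq> 0" "v \<bullet> y = 0" "A *v y = l *\<^sub>R y"
    using symmetric_matrix_eigenvector_orthogonal[OF sym v(1) y0] by blast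
  have evl: "l \<in> eigenvalue_set A" using y unfolding eigenvalue_set_def by auto
  have "l \<noteq> 0"
  proof
    assume "l = 0"
    hence "y \<in> span {v}" using ker y(3) by simp
    thus False using span_singleton_orthogonal_eq_0 y by blast
  qed
  hence "0 < l" using eigenvalue_nonneg_if_psd[OF psd evl] by simp
  moreover have "l \<in># eigenvalue_mset A"
  proof -
    have "independent {y}"
      using y(1) independent_insertI[of y "{}"] by (simp add: independent_empty)
    moreover have "{y} \<subseteq> {x. A *v x = l *\<^sub>R x}" using y(3) by simp
    ultimately have "1 \<le> dim {x. A *v x = l *\<^sub>R x}"
      using independent_card_le_dim[of "{y}" "{x. A *v x = l *\<^sub>R x}"] by simp
    thus ?thesis using count_eigenvalue_mset[OF sym, of l] evl by (simp flip: count_greater_zero_iff)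
  qed
  ultimately show "0 < lambda2 A"
    unfolding lambda2_def
    by (intro sorted_list_of_multiset_nth_1_pos[OF eigenvalue_mset_nonneg_if_psd[OF sym psd] count1])
qed

text \<open>If \<open>v\<^sup>\<bottom> = 0\<close> the values of \<open>\<lambda>\<^sub>2\<close> are junk, but then every vector lies in \<open>span {v}\<close>.\<close>

lemma kernel_subset_span_if_lambda2_le:
  fixes A B :: "real^'n^'n"
  assumes "symmetric_matrix A" "\<And>z. 0 \<le> z \<bullet> (A *v z)" "A *v v = 0"
    and "symmetric_matrix B" "\<And>z. 0 \<le> z \<bullet> (B *v z)" "B *v v = 0"
    and "v \<noteq> 0" "lambda2 A \<le> lambda2 B"
    and "\<And>x. A *v x = 0 \<Longrightarrow> x \<in> span {v}" and "B *v x = 0"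
  shows "x \<in> span {v}"
proof (cases "\<exists>y0. y0 \<noteq> 0 \<and> v \<bullet> y0 = 0")
  case True
  then obtain y0 where y0: "y0 \<noteq> 0" "v \<bullet> y0 = 0" by blast
  have "0 < lambda2 A" by (rule lambda2_pos_if_kernel_in_span[OF assms(1-3,7) y0 assms(9)])
  hence "lambda2 B \<noteq> 0" using assms(8) by linarith
  thus ?thesis using lambda2_eq_0_if_kernel_not_in_span[OF assms(4-7,10)] by blast
next
  case False
  have "x - ((v \<bullet> x) / (v \<bullet> v)) *\<^sub>R v = 0"
    using False inner_diff_projection_eq_0[OF assms(7), of x] by blast
  hence "x = ((v \<bullet> x) / (v \<bullet> v)) *\<^sub>R v" by simp
  thus ?thesis by (metis span_base span_scale singletonI)
qed

section \<open>Weighted graph Laplacians\<close>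

definition ones_vec :: "real^'n" where
  "ones_vec = (\<chi> i. 1)"

lemma ones_vec_nth [simp]: "ones_vec $ i = 1"
  by (simp add: ones_vec_def)

lemma inner_ones_vec: "ones_vec \<bullet> x = (\<Sum>i\<in>UNIV. x $ i)"
  by (simp add: inner_vec_def)

lemma ones_vec_inner_self: "ones_vec \<bullet> (ones_vec :: real^'n) = real CARD('n)"
  by (simp add: inner_ones_vec)

lemma ones_vec_neq_0: "(ones_vec :: real^'n) \<noteq> 0"
  by (simp add: vec_eq_iff)

lemma ones_mat_mult: "ones_mat *v x = (ones_vec \<bullet> x) *\<^sub>R (ones_vec :: real^'n)"
  by (simp add: vec_eq_iff ones_mat_def matrix_vector_mult_def inner_ones_vec)

lemma symmetric_matrix_ones_mat: "symmetric_matrix ones_mat"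
  by (simp add: symmetric_matrix_def transpose_def ones_mat_def vec_eq_iff)

definition weighted_laplacian :: "('n::finite \<Rightarrow> 'n \<Rightarrow> real) \<Rightarrow> real^'n^'n" where
  "weighted_laplacian w = (\<chi> i j. (if i = j then (\<Sum>k\<in>UNIV. w i k) else 0) - w i j)"

lemma weighted_laplacian_mult:
  "(weighted_laplacian w *v x) $ i = (\<Sum>k\<in>UNIV. w i k * (x $ i - x $ k))"
proof -
  have "(weighted_laplacian w *v x) $ i
      = (\<Sum>j\<in>UNIV. ((if i = j then (\<Sum>k\<in>UNIV. w i k) else 0) - w i j) * x $ j)"
    by (simp add: weighted_laplacian_def matrix_vector_mult_def)
  also have "\<dots> = (\<Sum>j\<in>UNIV. (if i = j then (\<Sum>k\<in>UNIV. w i k) * x $ j else 0) - w i j * x $ j)"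
    by (intro sum.cong refl) (auto simp: algebra_simps)
  also have "\<dots> = (\<Sum>k\<in>UNIV. w i k) * x $ i - (\<Sum>j\<in>UNIV. w i j * x $ j)"
    by (simp add: sum_subtractf)
  also have "\<dots> = (\<Sum>k\<in>UNIV. w i k * (x $ i - x $ k))"
    by (simp add: sum_distrib_right right_diff_distrib sum_subtractf)
  finally show ?thesis .
qed

lemma weighted_laplacian_ones: "weighted_laplacian w *v ones_vec = 0"
  by (simp add: vec_eq_iff weighted_laplacian_mult)

lemma symmetric_weighted_laplacian:
  "(\<And>i j. w i j = w j i) \<Longrightarrow> symmetric_matrix (weighted_laplacian w)"
  by (simp add: symmetric_matrix_def transpose_def weighted_laplacian_def vec_eq_iff)

lemma weighted_laplacian_quadratic_form:
  assumes "\<And>i j. w i j = w j i"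
  shows "x \<bullet> (weighted_laplacian w *v x) = (\<Sum>i\<in>UNIV. \<Sum>j\<in>UNIV. w i j * (x $ i - x $ j)^2) / 2"
proof -
  define S where "S = (\<Sum>i\<in>UNIV. \<Sum>j\<in>UNIV. w i j * x $ i * (x $ i - x $ j))"
  have "x \<bullet> (weighted_laplacian w *v x) = S"
    by (simp add: S_def inner_vec_def weighted_laplacian_mult sum_distrib_left algebra_simps)
  moreover have swapped: "S = (\<Sum>i\<in>UNIV. \<Sum>j\<in>UNIV. w i j * x $ j * (x $ j - x $ i))"
  proof -
    have "S = (\<Sum>j\<in>UNIV. \<Sum>i\<in>UNIV. w i j * x $ i * (x $ i - x $ j))"
      unfolding S_def by (rule sum.swap)
    also have "\<dots> = (\<Sum>i\<in>UNIV. \<Sum>j\<in>UNIV. w i j * x $ j * (x $ j - x $ i))"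
      using assms by (metis (no_types, lifting) sum.cong)
    finally show ?thesis .
  qed
  have "2 * S = (\<Sum>i\<in>UNIV. \<Sum>j\<in>UNIV. w i j * (x $ i - x $ j)^2)"
  proof -
    have "2 * S = S + (\<Sum>i\<in>UNIV. \<Sum>j\<in>UNIV. w i j * x $ j * (x $ j - x $ i))"
      using swapped by simp
    also have "\<dots> = (\<Sum>i\<in>UNIV. \<Sum>j\<in>UNIV. w i j * x $ i * (x $ i - x $ j) + w i j * x $ j * (x $ j - x $ i))"
      unfolding S_def by (simp add: sum.distrib)
    also have "\<dots> = (\<Sum>i\<in>UNIV. \<Sum>j\<in>UNIV. w i j * (x $ i - x $ j)^2)"
      by (intro sum.cong refl) (simp add: power2_eq_square algebra_simps)
    finally show ?thesis .
  qed
  ultimately show ?thesis by simp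
qed

lemma weighted_laplacian_psd:
  assumes "\<And>i j. w i j = w j i" "\<And>i j. 0 \<le> w i j"
  shows "0 \<le> x \<bullet> (weighted_laplacian w *v x)"
  unfolding weighted_laplacian_quadratic_form[of w x, OF assms(1)]
  by (intro divide_nonneg_pos sum_nonneg mult_nonneg_nonneg assms(2) zero_le_power2) simp

lemma weighted_laplacian_kernel_edge:
  assumes sym: "\<And>i j. w i j = w j i" and nonneg: "\<And>i j. 0 \<le> w i j"
    and ker: "weighted_laplacian w *v x = 0" and pos: "w i j > 0"
  shows "x $ i = x $ j"
proof -
  have "(\<Sum>i\<in>UNIV. \<Sum>j\<in>UNIV. w i j * (x $ i - x $ j)^2) = 0"
    using weighted_laplacian_quadratic_form[of w x, OF sym] ker by simp
  hence "(\<Sum>j\<in>UNIV. w i j * (x $ i - x $ j)^2) = 0"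
    by (subst (asm) sum_nonneg_eq_0_iff) (auto intro!: sum_nonneg simp: nonneg)
  hence "w i j * (x $ i - x $ j)^2 = 0"
    by (subst (asm) sum_nonneg_eq_0_iff) (auto simp: nonneg)
  thus ?thesis using pos by simp
qed

lemma weighted_laplacian_kernel_connected:
  assumes sym: "\<And>i j. w i j = w j i" and nonneg: "\<And>i j. 0 \<le> w i j"
    and conn: "connected_graph E" and pos: "\<And>a b. {a, b} \<in> E \<Longrightarrow> a \<noteq> b \<Longrightarrow> 0 < w a b"
    and ker: "weighted_laplacian w *v x = 0"
  shows "x \<in> span {ones_vec}"
proof -
  have edge: "x $ a = x $ b" if "{a, b} \<in> E" for a b
    using weighted_laplacian_kernel_edge[OF sym nonneg ker pos[OF that]] by (cases "a = b") auto
  have "x $ u = x $ v" if "(\<lambda>a b. {a, b} \<in> E)\<^sup>*\<^sup>* u v" for u v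
    using that
  proof (induct rule: rtranclp_induct)
    case (step y z)
    thus ?case using edge[of y z] by simp
  qed simp
  hence "x = (x $ undefined) *\<^sub>R ones_vec"
    using conn unfolding connected_graph_def by (simp add: vec_eq_iff)
  thus ?thesis by (metis span_base span_scale singletonI)
qed

lemma weighted_laplacian_sum:
  assumes "finite J"
  shows "(\<Sum>j\<in>J. c j *\<^sub>R weighted_laplacian (w j)) = weighted_laplacian (\<lambda>i k. \<Sum>j\<in>J. c j * w j i k)"
proof -
  have "(\<Sum>j\<in>J. c j *\<^sub>R weighted_laplacian (w j)) $ i $ k
      = weighted_laplacian (\<lambda>i k. \<Sum>j\<in>J. c j * w j i k) $ i $ k" for i k
  proof (cases "i = k")
    case True
    have "(\<Sum>j\<in>J. c j * (\<Sum>l\<in>UNIV. w j i l)) = (\<Sum>l\<in>UNIV. \<Sum>j\<in>J. c j * w j i l)"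
      by (simp add: sum_distrib_left) (rule sum.swap)
    thus ?thesis using True by (simp add: weighted_laplacian_def sum_subtractf right_diff_distrib)
  next
    case False
    thus ?thesis by (simp add: weighted_laplacian_def sum_negf)
  qed
  thus ?thesis by (simp add: vec_eq_iff)
qed

definition adjacency :: "('n::finite) set set \<Rightarrow> 'n \<Rightarrow> 'n \<Rightarrow> real" where
  "adjacency F i j = (if i \<noteq> j \<and> {i, j} \<in> F then 1 else 0)"

definition neighbours :: "('n::finite) set set \<Rightarrow> 'n \<Rightarrow> 'n set" where
  "neighbours F i = {k. k \<noteq> i \<and> {i, k} \<in> F}"

lemma adjacency_sym: "adjacency F i j = adjacency F j i"
  by (auto simp: adjacency_def insert_commute)

lemma adjacency_nonneg: "0 \<le> adjacency F i j"
  by (simp add: adjacency_def)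

lemma neighbours_sym: "k \<in> neighbours F i \<longleftrightarrow> i \<in> neighbours F k"
  by (auto simp: neighbours_def insert_commute)

lemma card_incident_edges:
  assumes "graph_edges F"
  shows "card {e\<in>F. i \<in> e} = card (neighbours F i)"
proof -
  have "(\<lambda>k. {i, k}) ` neighbours F i = {e\<in>F. i \<in> e}"
  proof
    show "(\<lambda>k. {i, k}) ` neighbours F i \<subseteq> {e\<in>F. i \<in> e}" by (auto simp: neighbours_def)
    show "{e\<in>F. i \<in> e} \<subseteq> (\<lambda>k. {i, k}) ` neighbours F i"
    proof
      fix e assume "e \<in> {e\<in>F. i \<in> e}"
      hence e: "e \<in> F" "i \<in> e" by auto
      then obtain a b where ab: "a \<noteq> b" "e = {a, b}"
        using assms unfolding graph_edges_def by (meson card_2_iff)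
      show "e \<in> (\<lambda>k. {i, k}) ` neighbours F i"
      proof (cases "i = a")
        case True
        hence "b \<in> neighbours F i" using ab e by (auto simp: neighbours_def)
        thus ?thesis using ab True by auto
      next
        case False
        hence "i = b" using ab e by auto
        hence "a \<in> neighbours F i" using ab e by (auto simp: neighbours_def insert_commute)
        thus ?thesis using ab \<open>i = b\<close> by (auto simp: insert_commute)
      qed
    qed
  qed
  moreover have "inj_on (\<lambda>k. {i, k}) (neighbours F i)"
    by (auto simp: inj_on_def neighbours_def doubleton_eq_iff)
  ultimately show ?thesis by (metis card_image)
qed

lemma sum_adjacency: "(\<Sum>k\<in>UNIV. adjacency F i k * f k) = (\<Sum>k\<in>neighbours F i. f k)"
proof -
  have "(\<Sum>k\<in>UNIV. adjacency F i k * f k) = (\<Sum>k\<in>UNIV. if k \<in> neighbours F i then f k else 0)"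
    by (intro sum.cong refl) (auto simp: adjacency_def neighbours_def)
  thus ?thesis by (simp add: sum.If_cases)
qed

lemma laplacian_eq_weighted_laplacian:
  assumes "graph_edges F"
  shows "laplacian F = weighted_laplacian (adjacency F)"
proof -
  have "(\<Sum>k\<in>UNIV. adjacency F i k) = real (card {e\<in>F. i \<in> e})" for i
    using sum_adjacency[of F i "\<lambda>_. 1"] card_incident_edges[OF assms, of i] by simp
  moreover have "{i} \<notin> F" for i using assms unfolding graph_edges_def by fastforce
  ultimately show ?thesis
    by (auto simp: vec_eq_iff laplacian_def weighted_laplacian_def adjacency_def)
qed

text \<open>In a matching every vertex has at most one neighbour, so \<open>L\<close> acts on each edge
  \<open>{i, k}\<close> as \<open>[[1, -1], [-1, 1]]\<close>, whose square is twice itself.\<close>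

lemma laplacian_matching_square:
  assumes "graph_edges F" "is_matching F"
  shows "laplacian F ** laplacian F = 2 *\<^sub>R laplacian F"
proof -
  define L where "L = weighted_laplacian (adjacency F)"
  have Lx: "(L *v x) $ i = (\<Sum>k\<in>neighbours F i. x $ i - x $ k)" for x i
    by (simp add: L_def weighted_laplacian_mult sum_adjacency)
  have deg: "card (neighbours F i) \<le> 1" for i
    using assms(2) card_incident_edges[OF assms(1), of i] unfolding is_matching_def by metis
  have "card (neighbours F i) = 0 \<or> card (neighbours F i) = 1" for i
    using deg[of i] by linarith
  hence nb: "neighbours F i = {} \<or> (\<exists>k. neighbours F i = {k})" for i
    by (auto simp: card_1_singleton_iff card_eq_0_iff)
  have "(L *v (L *v x)) $ i = (2 *\<^sub>R (L *v x)) $ i" for x i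
  proof (cases "neighbours F i = {}")
    case True thus ?thesis by (simp add: Lx)
  next
    case False
    then obtain k where k: "neighbours F i = {k}" using nb by blast
    hence "neighbours F k = {i}" using nb[of k] neighbours_sym[of k F i] by auto
    thus ?thesis by (simp add: Lx k)
  qed
  hence "(L ** L) *v x = (2 *\<^sub>R L) *v x" for x
    by (simp only: vec_eq_iff matrix_vector_mul_assoc[symmetric] scaleR_matrix_vector_assoc[symmetric]) simp
  hence "L ** L = 2 *\<^sub>R L" by (simp only: matrix_eq) simp
  thus ?thesis using laplacian_eq_weighted_laplacian[OF assms(1)] by (simp add: L_def)
qed

section \<open>The expected mixing matrix\<close>

definition bernoulli_prob :: "nat \<Rightarrow> (nat \<Rightarrow> real) \<Rightarrow> (nat \<Rightarrow> real) \<Rightarrow> real" where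
  "bernoulli_prob M p b = (\<Prod>j<M. if b j = 1 then p j else 1 - p j)"

definition bernoulli_expectation ::
  "nat \<Rightarrow> (nat \<Rightarrow> real) \<Rightarrow> ((nat \<Rightarrow> real) \<Rightarrow> 'a::real_vector) \<Rightarrow> 'a" where
  "bernoulli_expectation M p f =
     (\<Sum>b\<in>PiE {..<M} (\<lambda>_. {0, 1}). bernoulli_prob M p b *\<^sub>R f b)"

text \<open>Each summand is a product of one factor per coordinate, so the sum over the product set
  of outcomes factors coordinatewise.\<close>

lemma bernoulli_expectation_prod:
  assumes "T \<subseteq> {..<M}"
  shows "bernoulli_expectation M p (\<lambda>b. (\<Prod>k\<in>T. b k) *\<^sub>R X) = (\<Prod>k\<in>T. p k) *\<^sub>R X"
proof -
  define h where "h k v = (if v = 1 then p k else 1 - p k) * (if k \<in> T then v else 1)"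
    for k and v :: real
  have T: "{..<M} \<inter> T = T" using assms by auto
  have "bernoulli_prob M p b * (\<Prod>k\<in>T. b k) = (\<Prod>k<M. h k (b k))" for b
  proof -
    have "(\<Prod>k<M. h k (b k)) = bernoulli_prob M p b * (\<Prod>k<M. if k \<in> T then b k else 1)"
      by (simp add: h_def bernoulli_prob_def prod.distrib)
    also have "(\<Prod>k<M. if k \<in> T then b k else 1) = (\<Prod>k\<in>T. b k)"
      by (simp add: prod.If_cases T)
    finally show ?thesis by simp
  qed
  hence "(\<Sum>b\<in>PiE {..<M} (\<lambda>_. {0, 1::real}). bernoulli_prob M p b * (\<Prod>k\<in>T. b k))
        = (\<Sum>b\<in>PiE {..<M} (\<lambda>_. {0, 1::real}). \<Prod>k<M. h k (b k))" by simp
  also have "\<dots> = (\<Prod>k<M. \<Sum>v\<in>{0, 1::real}. h k v)"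
    by (rule prod_sum_PiE[symmetric]) auto
  also have "\<dots> = (\<Prod>k<M. if k \<in> T then p k else 1)"
    by (intro prod.cong refl) (simp add: h_def)
  also have "\<dots> = (\<Prod>k\<in>T. p k)"
    by (simp add: prod.If_cases T)
  finally show ?thesis
    by (simp add: bernoulli_expectation_def scaleR_scaleR scaleR_sum_left[symmetric])
qed

lemma bernoulli_expectation_const: "bernoulli_expectation M p (\<lambda>_. X) = X"
  using bernoulli_expectation_prod[of "{}" M p X] by simp

lemma bernoulli_expectation_coord:
  assumes "j < M"
  shows "bernoulli_expectation M p (\<lambda>b. b j *\<^sub>R X) = p j *\<^sub>R X"
  using bernoulli_expectation_prod[of "{j}" M p X] assms by simp

lemma bernoulli_expectation_coord_pair:
  assumes "i < M" "j < M"
  shows "bernoulli_expectation M p (\<lambda>b. (b i * b j) *\<^sub>R X) =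
    (if i = j then p i else p i * p j) *\<^sub>R X"
proof (cases "i = j")
  case True
  have "bernoulli_expectation M p (\<lambda>b. (b i * b j) *\<^sub>R X) = bernoulli_expectation M p (\<lambda>b. b i *\<^sub>R X)"
    unfolding bernoulli_expectation_def
  proof (intro sum.cong refl)
    fix b assume "b \<in> PiE {..<M} (\<lambda>_. {0, 1::real})"
    hence "b i \<in> {0, 1}" using assms by (auto simp: PiE_iff)
    thus "bernoulli_prob M p b *\<^sub>R (b i * b j) *\<^sub>R X = bernoulli_prob M p b *\<^sub>R b i *\<^sub>R X"
      using True by auto
  qed
  thus ?thesis using bernoulli_expectation_coord[OF assms(1)] True by simp
next
  case False
  thus ?thesis using bernoulli_expectation_prod[of "{i, j}" M p X] assms by (simp add: mult.commute)
qed

lemma bernoulli_expectation_add: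
  "bernoulli_expectation M p (\<lambda>b. f b + g b) = bernoulli_expectation M p f + bernoulli_expectation M p g"
  by (simp add: bernoulli_expectation_def scaleR_add_right sum.distrib)

lemma bernoulli_expectation_diff:
  "bernoulli_expectation M p (\<lambda>b. f b - g b) = bernoulli_expectation M p f - bernoulli_expectation M p g"
  by (simp add: bernoulli_expectation_def scaleR_diff_right sum_subtractf)

lemma bernoulli_expectation_scaleR:
  "bernoulli_expectation M p (\<lambda>b. c *\<^sub>R f b) = c *\<^sub>R bernoulli_expectation M p f"
  by (simp add: bernoulli_expectation_def scaleR_sum_right mult.commute)

lemma bernoulli_expectation_sum:
  "bernoulli_expectation M p (\<lambda>b. \<Sum>i\<in>I. f i b) = (\<Sum>i\<in>I. bernoulli_expectation M p (f i))"
  unfolding bernoulli_expectation_def scaleR_sum_right by (rule sum.swap)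

lemma matrix_add_rdistrib: "((A :: real^'n^'m) + B) ** C = A ** C + B ** C"
  by (simp add: matrix_matrix_mult_def vec_eq_iff sum.distrib distrib_right)

lemma matrix_diff_ldistrib: "(A :: real^'n^'m) ** (B - C) = A ** B - A ** C"
  by (simp add: matrix_matrix_mult_def vec_eq_iff sum_subtractf right_diff_distrib)

lemma matrix_diff_rdistrib: "((A :: real^'n^'m) - B) ** C = A ** C - B ** C"
  by (simp add: matrix_matrix_mult_def vec_eq_iff sum_subtractf left_diff_distrib)

lemma matrix_mult_scaleR_both: "(a *\<^sub>R (A :: real^'n^'m)) ** (b *\<^sub>R B) = (a * b) *\<^sub>R (A ** B)"
  by (simp add: matrix_matrix_mult_def vec_eq_iff sum_distrib_left mult_ac)

lemma matrix_mult_sum_left: "(\<Sum>s\<in>S. f s) ** (B :: real^'n^'m) = (\<Sum>s\<in>S. f s ** B)"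
  by (induct S rule: infinite_finite_induct) (simp_all add: matrix_add_rdistrib)

lemma matrix_mult_sum_right: "(A :: real^'n^'m) ** (\<Sum>s\<in>S. f s) = (\<Sum>s\<in>S. A ** f s)"
  by (induct S rule: infinite_finite_induct) (simp_all add: matrix_add_ldistrib)

lemma symmetric_id_minus_square:
  assumes "symmetric_matrix S"
  shows "transpose (mat 1 - a *\<^sub>R S) ** (mat 1 - a *\<^sub>R S) =
    mat 1 - (2 * a) *\<^sub>R S + a^2 *\<^sub>R (S ** S)"
proof -
  have "transpose (mat 1 - a *\<^sub>R S) = mat 1 - a *\<^sub>R S"
    using symmetric_matrix_diff[OF symmetric_matrix_mat symmetric_matrix_scaleR[OF assms]]
    unfolding symmetric_matrix_def .
  hence "transpose (mat 1 - a *\<^sub>R S) ** (mat 1 - a *\<^sub>R S) =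
      mat 1 - a *\<^sub>R S - (a *\<^sub>R S - (a *\<^sub>R S) ** (a *\<^sub>R S))"
    by (simp add: matrix_diff_ldistrib matrix_diff_rdistrib)
  also have "(a *\<^sub>R S) ** (a *\<^sub>R S) = a^2 *\<^sub>R (S ** S)"
    by (simp add: matrix_mult_scaleR_both power2_eq_square)
  also have "mat 1 - a *\<^sub>R S - (a *\<^sub>R S - a^2 *\<^sub>R (S ** S)) =
      mat 1 - (a *\<^sub>R S + a *\<^sub>R S) + a^2 *\<^sub>R (S ** S)"
    by (simp only: diff_conv_add_uminus minus_add_distrib minus_minus ac_simps)
  also have "a *\<^sub>R S + a *\<^sub>R S = (2 * a) *\<^sub>R S"
    by (simp only: mult_2 scaleR_add_left)
  finally show ?thesis .
qed

lemma sum_scaleR_square: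
  "(\<Sum>j\<in>J. c j *\<^sub>R L j) ** (\<Sum>j\<in>J. c j *\<^sub>R L j) =
    (\<Sum>i\<in>J. \<Sum>j\<in>J. (c i * c j) *\<^sub>R ((L i :: real^'n^'n) ** L j))"
  by (simp only: matrix_mult_sum_left) (simp only: matrix_mult_sum_right matrix_mult_scaleR_both)

text \<open>The last summand collects the diagonal of \<open>E[b\<^sub>i b\<^sub>j] = p\<^sub>i p\<^sub>j + [i = j] p\<^sub>i (1 - p\<^sub>i)\<close>.\<close>

lemma expected_WtW_eq:
  assumes "\<And>j. j < M \<Longrightarrow> symmetric_matrix (L j)"
  shows "expected_WtW M L p \<alpha> = mat 1 - (2 * \<alpha>) *\<^sub>R (\<Sum>j<M. p j *\<^sub>R L j)
     + \<alpha>^2 *\<^sub>R ((\<Sum>j<M. p j *\<^sub>R L j) ** (\<Sum>j<M. p j *\<^sub>R L j)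
                 + (\<Sum>j<M. (p j * (1 - p j)) *\<^sub>R (L j ** L j)))"
proof -
  have WtW: "(let W = mat 1 - \<alpha> *\<^sub>R (\<Sum>j<M. b j *\<^sub>R L j) in transpose W ** W) =
      mat 1 - (2 * \<alpha>) *\<^sub>R (\<Sum>j<M. b j *\<^sub>R L j)
      + \<alpha>^2 *\<^sub>R (\<Sum>i<M. \<Sum>j<M. (b i * b j) *\<^sub>R (L i ** L j))" for b
    unfolding Let_def sum_scaleR_square[symmetric]
    by (intro symmetric_id_minus_square symmetric_matrix_sum symmetric_matrix_scaleR assms) simp
  have pairs: "(\<Sum>i<M. \<Sum>j<M. (if i = j then p i else p i * p j) *\<^sub>R (L i ** L j)) =
      (\<Sum>i<M. \<Sum>j<M. (p i * p j) *\<^sub>R (L i ** L j)) + (\<Sum>j<M. (p j * (1 - p j)) *\<^sub>R (L j ** L j))"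
  proof -
    have "(\<Sum>i<M. \<Sum>j<M. (if i = j then p i else p i * p j) *\<^sub>R (L i ** L j)) =
        (\<Sum>i<M. \<Sum>j<M. (p i * p j) *\<^sub>R (L i ** L j)
          + (if i = j then (p i * (1 - p i)) *\<^sub>R (L i ** L j) else 0))"
      by (intro sum.cong refl) (simp add: algebra_simps)
    thus ?thesis by (simp add: sum.distrib)
  qed
  have "expected_WtW M L p \<alpha> = bernoulli_expectation M p
      (\<lambda>b. mat 1 - (2 * \<alpha>) *\<^sub>R (\<Sum>j<M. b j *\<^sub>R L j)
           + \<alpha>^2 *\<^sub>R (\<Sum>i<M. \<Sum>j<M. (b i * b j) *\<^sub>R (L i ** L j)))"
    unfolding expected_WtW_def bernoulli_expectation_def bernoulli_prob_def WtW ..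
  also have "\<dots> = mat 1 - (2 * \<alpha>) *\<^sub>R (\<Sum>j<M. p j *\<^sub>R L j)
      + \<alpha>^2 *\<^sub>R (\<Sum>i<M. \<Sum>j<M. (if i = j then p i else p i * p j) *\<^sub>R (L i ** L j))"
    by (simp add: bernoulli_expectation_add bernoulli_expectation_diff bernoulli_expectation_scaleR
        bernoulli_expectation_sum bernoulli_expectation_const bernoulli_expectation_coord
        bernoulli_expectation_coord_pair)
  finally show ?thesis unfolding pairs sum_scaleR_square .
qed

section \<open>The mixing rate and the semidefinite program\<close>

lemma sum_matrix_vector_mult: "(\<Sum>s\<in>S. f s) *v x = (\<Sum>s\<in>S. f s *v x)"
  by (induct S rule: infinite_finite_induct) (simp_all add: matrix_vector_mult_add_rdistrib)

lemma psd_nonneg_combination: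
  fixes A :: "'j \<Rightarrow> real^'n^'n"
  assumes "\<And>j. j \<in> J \<Longrightarrow> 0 \<le> c j" "\<And>j z. j \<in> J \<Longrightarrow> 0 \<le> z \<bullet> (A j *v z)"
  shows "0 \<le> x \<bullet> ((\<Sum>j\<in>J. c j *\<^sub>R A j) *v x)"
  unfolding sum_matrix_vector_mult inner_sum_right
  using assms by (intro sum_nonneg) (simp add: scaleR_matrix_vector_assoc[symmetric])

lemma filterlim_quadratic_at_infinity:
  fixes a b c :: real
  assumes "c > 0"
  shows "filterlim (\<lambda>x. a + b * x + c * x^2) at_top at_infinity"
  unfolding at_infinity_eq_at_top_bot using assms by (intro filterlim_sup) real_asymp+

locale matcha_setup =
  fixes M :: nat and L :: "nat \<Rightarrow> real^'n::finite^'n" and p :: "nat \<Rightarrow> real"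
  assumes symmetric: "\<And>j. j < M \<Longrightarrow> symmetric_matrix (L j)"
    and psd: "\<And>j x. j < M \<Longrightarrow> 0 \<le> x \<bullet> (L j *v x)"
    and ones: "\<And>j. j < M \<Longrightarrow> L j *v ones_vec = 0"
    and square: "\<And>j. j < M \<Longrightarrow> L j ** L j = 2 *\<^sub>R L j"
    and prob: "\<And>j. j < M \<Longrightarrow> 0 \<le> p j \<and> p j \<le> 1"
begin

definition "Lbar = (\<Sum>j<M. p j *\<^sub>R L j)"

definition "Ltil = (\<Sum>j<M. (p j * (1 - p j)) *\<^sub>R L j)"

definition "Lquad = Lbar ** Lbar + 2 *\<^sub>R Ltil"

definition "sdp_matrix \<alpha> \<beta> =
  mat 1 - (2 * \<alpha>) *\<^sub>R Lbar + \<beta> *\<^sub>R Lquad - (1 / real CARD('n)) *\<^sub>R ones_mat"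

definition "rate \<alpha> = onorm ((*v) (sdp_matrix \<alpha> (\<alpha>^2)))"

lemma symmetric_Lbar: "symmetric_matrix Lbar"
  and symmetric_Ltil: "symmetric_matrix Ltil"
  unfolding Lbar_def Ltil_def by (auto intro!: symmetric_matrix_sum symmetric_matrix_scaleR symmetric)

lemma psd_Lbar: "0 \<le> x \<bullet> (Lbar *v x)"
  and psd_Ltil: "0 \<le> x \<bullet> (Ltil *v x)"
  unfolding Lbar_def Ltil_def using prob by (auto intro!: psd_nonneg_combination psd)

lemma Lbar_ones: "Lbar *v ones_vec = 0"
  and Ltil_ones: "Ltil *v ones_vec = 0"
  unfolding Lbar_def Ltil_def
  by (simp_all add: sum_matrix_vector_mult scaleR_matrix_vector_assoc[symmetric] ones)

lemma Lquad_mult: "Lquad *v x = Lbar *v (Lbar *v x) + 2 *\<^sub>R (Ltil *v x)"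
  by (simp add: Lquad_def matrix_vector_mult_add_rdistrib scaleR_matrix_vector_assoc
      matrix_vector_mul_assoc)

lemma Lquad_quadratic_form: "x \<bullet> (Lquad *v x) = (Lbar *v x) \<bullet> (Lbar *v x) + 2 * (x \<bullet> (Ltil *v x))"
  using symmetric_matrix_inner[OF symmetric_Lbar, of x "Lbar *v x"]
  by (simp add: Lquad_mult inner_add_right)

lemma symmetric_Lquad: "symmetric_matrix Lquad"
  unfolding Lquad_def
  by (intro symmetric_matrix_add symmetric_matrix_scaleR symmetric_matrix_mult_self
      symmetric_Lbar symmetric_Ltil)

lemma psd_Lquad: "0 \<le> x \<bullet> (Lquad *v x)"
  using psd_Ltil[of x] by (simp add: Lquad_quadratic_form)

lemma symmetric_sdp_matrix: "symmetric_matrix (sdp_matrix \<alpha> \<beta>)"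
  unfolding sdp_matrix_def
  by (intro symmetric_matrix_add symmetric_matrix_diff symmetric_matrix_scaleR symmetric_matrix_mat
      symmetric_Lbar symmetric_Lquad symmetric_matrix_ones_mat)

lemma sdp_matrix_mult: "sdp_matrix \<alpha> \<beta> *v x =
    x - (2 * \<alpha>) *\<^sub>R (Lbar *v x) + \<beta> *\<^sub>R (Lquad *v x) - ((ones_vec \<bullet> x) / real CARD('n)) *\<^sub>R ones_vec"
  by (simp add: sdp_matrix_def matrix_vector_mult_add_rdistrib matrix_vector_mult_diff_rdistrib
      scaleR_matrix_vector_assoc[symmetric] ones_mat_mult)

lemma sdp_matrix_ones: "sdp_matrix \<alpha> \<beta> *v ones_vec = 0"
  by (simp add: sdp_matrix_mult Lbar_ones Lquad_mult Ltil_ones ones_vec_inner_self)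

lemma sdp_matrix_quadratic_form: "x \<bullet> (sdp_matrix \<alpha> \<beta> *v x) =
    x \<bullet> x - 2 * \<alpha> * (x \<bullet> (Lbar *v x)) + \<beta> * (x \<bullet> (Lquad *v x)) - (ones_vec \<bullet> x)^2 / real CARD('n)"
  by (simp add: sdp_matrix_mult inner_diff_right inner_add_right power2_eq_square
      inner_commute[of x ones_vec])

lemma sdp_matrix_mono:
  assumes "\<alpha>^2 \<le> \<beta>"
  shows "x \<bullet> (sdp_matrix \<alpha> (\<alpha>^2) *v x) \<le> x \<bullet> (sdp_matrix \<alpha> \<beta> *v x)"
  using mult_right_mono[OF assms psd_Lquad[of x]] by (simp add: sdp_matrix_quadratic_form)

text \<open>On \<open>1\<^sup>\<bottom>\<close> the form of \<open>sdp_matrix \<alpha> \<alpha>\<^sup>2\<close> is \<open>|y - \<alpha> Lbar y|\<^sup>2 + 2\<alpha>\<^sup>2 y\<^sup>T Ltil y\<close>.\<close>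

lemma sdp_matrix_psd: "0 \<le> x \<bullet> (sdp_matrix \<alpha> (\<alpha>^2) *v x)"
proof -
  define y where "y = x - ((ones_vec \<bullet> x) / real CARD('n)) *\<^sub>R ones_vec"
  have "ones_vec \<bullet> y = 0"
    by (simp add: y_def inner_diff_right ones_vec_inner_self)
  hence "y \<bullet> (sdp_matrix \<alpha> (\<alpha>^2) *v y) =
      (y - \<alpha> *\<^sub>R (Lbar *v y)) \<bullet> (y - \<alpha> *\<^sub>R (Lbar *v y)) + 2 * \<alpha>^2 * (y \<bullet> (Ltil *v y))"
    by (simp add: sdp_matrix_quadratic_form Lquad_quadratic_form inner_diff_left inner_diff_right
        inner_commute[of "Lbar *v y" y] algebra_simps power2_eq_square)
  also have "\<dots> \<ge> 0" using psd_Ltil[of y] by simp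
  finally show ?thesis
    unfolding y_def quadratic_form_shift_kernel[OF symmetric_sdp_matrix sdp_matrix_ones] .
qed

lemma expected_WtW_eq_sdp_matrix:
  "expected_WtW M L p \<alpha> = sdp_matrix \<alpha> (\<alpha>^2) + (1 / real CARD('n)) *\<^sub>R ones_mat"
proof -
  have "(\<Sum>j<M. (p j * (1 - p j)) *\<^sub>R (L j ** L j)) = 2 *\<^sub>R Ltil"
    by (simp add: Ltil_def square scaleR_sum_right mult.commute)
  thus ?thesis
    by (simp add: expected_WtW_eq[OF symmetric] sdp_matrix_def Lquad_def flip: Lbar_def)
qed

lemma matcha_rho_eq_rate: "matcha_rho M L p \<alpha> = rate \<alpha>"
  by (simp add: matcha_rho_def spec_norm_def rate_def expected_WtW_eq_sdp_matrix)

lemma quadratic_form_le_rate: "x \<bullet> (sdp_matrix \<alpha> (\<alpha>^2) *v x) \<le> rate \<alpha> * (norm x)^2"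
  unfolding rate_def by (rule quadratic_form_le_onorm)

lemma rate_le:
  assumes "\<And>x. x \<bullet> (sdp_matrix \<alpha> (\<alpha>^2) *v x) \<le> c * (norm x)^2"
  shows "rate \<alpha> \<le> c"
  unfolding rate_def by (rule onorm_le_of_quadratic_form[OF symmetric_sdp_matrix sdp_matrix_psd assms])

lemma sdp_feasible_iff:
  "sdp_feasible M L p r \<alpha> \<beta> \<longleftrightarrow>
    \<alpha>^2 \<le> \<beta> \<and> (\<forall>x. x \<bullet> (sdp_matrix \<alpha> \<beta> *v x) \<le> r * (norm x)^2)"
proof -
  have "sdp_feasible M L p r \<alpha> \<beta> \<longleftrightarrow> \<alpha>^2 - \<beta> \<le> 0 \<and> psd_le (sdp_matrix \<alpha> \<beta>) (r *\<^sub>R mat 1)"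
    unfolding sdp_feasible_def Let_def sdp_matrix_def Lquad_def Lbar_def Ltil_def ..
  moreover have "0 \<le> x \<bullet> ((r *\<^sub>R mat 1 - A) *v x) \<longleftrightarrow> x \<bullet> (A *v x) \<le> r * (norm x)^2"
    for A :: "real^'n^'n" and x
    by (simp add: matrix_vector_mult_diff_rdistrib scaleR_matrix_vector_assoc[symmetric]
        inner_diff_right power2_norm_eq_inner)
  ultimately show ?thesis by (simp add: psd_le_def)
qed

lemma sdp_feasible_rate: "sdp_feasible M L p (rate \<alpha>) \<alpha> (\<alpha>^2)"
  using quadratic_form_le_rate by (simp add: sdp_feasible_iff)

lemma rate_le_if_sdp_feasible:
  assumes "sdp_feasible M L p r \<alpha> \<beta>"
  shows "rate \<alpha> \<le> r"
proof (rule rate_le)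
  fix x
  have "\<alpha>^2 \<le> \<beta>" "x \<bullet> (sdp_matrix \<alpha> \<beta> *v x) \<le> r * (norm x)^2"
    using assms by (simp_all add: sdp_feasible_iff)
  thus "x \<bullet> (sdp_matrix \<alpha> (\<alpha>^2) *v x) \<le> r * (norm x)^2"
    using sdp_matrix_mono[of \<alpha> \<beta> x] by linarith
qed

lemma sdp_optimal_imp_rate_min:
  assumes "sdp_optimal M L p r \<alpha> \<beta>"
  shows "rate \<alpha> = r \<and> (\<forall>\<alpha>'. rate \<alpha> \<le> rate \<alpha>')"
proof -
  have "rate \<alpha> \<le> r"
    using assms rate_le_if_sdp_feasible unfolding sdp_optimal_def by blast
  moreover have "r \<le> rate \<alpha>'" for \<alpha>'
    using assms sdp_feasible_rate unfolding sdp_optimal_def by blast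
  ultimately show ?thesis by (auto intro: antisym order_trans)
qed

lemma continuous_rate: "continuous_on UNIV rate"
proof -
  have "continuous_on UNIV (\<lambda>\<alpha>. sdp_matrix \<alpha> (\<alpha>^2))"
    unfolding sdp_matrix_def by (intro continuous_intros)
  thus ?thesis
    unfolding rate_def by (rule continuous_on_compose2[OF continuous_on_onorm_matrix[of UNIV]]) simp
qed

text \<open>Either the form of \<open>Lquad\<close> vanishes identically, and then \<open>Lbar = 0\<close> and \<open>rate\<close> is
  constant, or some \<open>x\<^sub>0\<close> gives \<open>rate \<alpha> \<ge> x\<^sub>0\<^sup>T (sdp_matrix \<alpha> \<alpha>\<^sup>2) x\<^sub>0 / |x\<^sub>0|\<^sup>2\<close>, a quadratic
  in \<open>\<alpha>\<close> with positive leading coefficient.\<close>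

lemma rate_attains_min: "\<exists>\<alpha>\<^sub>0. \<forall>\<alpha>. rate \<alpha>\<^sub>0 \<le> rate \<alpha>"
proof (cases "\<exists>x\<^sub>0. 0 < x\<^sub>0 \<bullet> (Lquad *v x\<^sub>0)")
  case True
  then obtain x\<^sub>0 where q: "0 < x\<^sub>0 \<bullet> (Lquad *v x\<^sub>0)" by blast
  define N where "N = x\<^sub>0 \<bullet> x\<^sub>0"
  have "x\<^sub>0 \<noteq> 0" using q by auto
  hence N: "0 < N" by (simp add: N_def)
  define a b c where "a = (x\<^sub>0 \<bullet> x\<^sub>0 - (ones_vec \<bullet> x\<^sub>0)^2 / real CARD('n)) / N"
    and "b = - 2 * (x\<^sub>0 \<bullet> (Lbar *v x\<^sub>0)) / N" and "c = (x\<^sub>0 \<bullet> (Lquad *v x\<^sub>0)) / N"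
  have lower: "a + b * \<alpha> + c * \<alpha>^2 \<le> rate \<alpha>" for \<alpha>
  proof -
    have "a + b * \<alpha> + c * \<alpha>^2 = x\<^sub>0 \<bullet> (sdp_matrix \<alpha> (\<alpha>^2) *v x\<^sub>0) / N"
      unfolding a_def b_def c_def sdp_matrix_quadratic_form by (simp add: add_divide_distrib diff_divide_distrib mult_ac)
    also have "\<dots> \<le> rate \<alpha>"
      using quadratic_form_le_rate[of x\<^sub>0 \<alpha>] N by (simp add: N_def power2_norm_eq_inner divide_le_eq)
    finally show ?thesis .
  qed
  have "0 < c" using q N by (simp add: c_def)
  hence "filterlim (\<lambda>\<alpha>. a + b * \<alpha> + c * \<alpha>^2) at_top at_infinity"
    by (rule filterlim_quadratic_at_infinity)
  moreover have "eventually (\<lambda>\<alpha>. a + b * \<alpha> + c * \<alpha>^2 \<le> rate \<alpha>) at_infinity"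
    using lower by (simp add: always_eventually)
  ultimately have "filterlim rate at_top at_infinity" by (rule filterlim_at_top_mono)
  thus ?thesis by (rule continuous_attains_inf_coercive[OF continuous_rate])
next
  case False
  have "x \<bullet> (sdp_matrix 0 (0^2) *v x) \<le> rate \<alpha> * (norm x)^2" for \<alpha> x
  proof -
    have "x \<bullet> (Lquad *v x) \<le> 0" using False by (simp add: not_less)
    hence q: "x \<bullet> (Lquad *v x) = 0" using psd_Lquad[of x] by linarith
    hence "(Lbar *v x) \<bullet> (Lbar *v x) = 0"
      using psd_Ltil[of x] inner_ge_zero[of "Lbar *v x"] unfolding Lquad_quadratic_form by linarith
    hence "Lbar *v x = 0" by simp
    with q have "x \<bullet> (sdp_matrix 0 (0^2) *v x) = x \<bullet> (sdp_matrix \<alpha> (\<alpha>^2) *v x)"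
      by (simp add: sdp_matrix_quadratic_form)
    thus ?thesis using quadratic_form_le_rate[of x \<alpha>] by simp
  qed
  hence "rate 0 \<le> rate \<alpha>" for \<alpha> by (intro rate_le) blast
  thus ?thesis by blast
qed

lemma sdp_optimal_exists: "\<exists>r \<alpha> \<beta>. sdp_optimal M L p r \<alpha> \<beta>"
proof -
  obtain \<alpha>\<^sub>0 where min: "\<And>\<alpha>. rate \<alpha>\<^sub>0 \<le> rate \<alpha>" using rate_attains_min by blast
  have "rate \<alpha>\<^sub>0 \<le> r" if "sdp_feasible M L p r \<alpha> \<beta>" for r \<alpha> \<beta>
    using min[of \<alpha>] rate_le_if_sdp_feasible[OF that] by linarith
  hence "sdp_optimal M L p (rate \<alpha>\<^sub>0) \<alpha>\<^sub>0 (\<alpha>\<^sub>0^2)"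
    unfolding sdp_optimal_def using sdp_feasible_rate by blast
  thus ?thesis by blast
qed

text \<open>On \<open>1\<^sup>\<bottom>\<close> the form of \<open>sdp_matrix \<alpha> \<alpha>\<^sup>2\<close> is \<open>|y|\<^sup>2 - 2\<alpha> y\<^sup>T Lbar y + \<alpha>\<^sup>2 y\<^sup>T Lquad y\<close>,
  and the component of \<open>x\<close> along \<open>1\<close> does not contribute.\<close>

lemma rate_le_if_coercive:
  assumes \<mu>: "\<And>y. ones_vec \<bullet> y = 0 \<Longrightarrow> \<mu> * (y \<bullet> y) \<le> y \<bullet> (Lbar *v y)" and "0 \<le> \<alpha>"
  shows "rate \<alpha> \<le> max (1 - 2 * \<alpha> * \<mu> + \<alpha>^2 * onorm ((*v) Lquad)) 0"
proof (rule rate_le)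
  fix x :: "real^'n"
  define c where "c = 1 - 2 * \<alpha> * \<mu> + \<alpha>^2 * onorm ((*v) Lquad)"
  define t where "t = (ones_vec \<bullet> x) / real CARD('n)"
  define y where "y = x - t *\<^sub>R ones_vec"
  have y: "ones_vec \<bullet> y = 0" by (simp add: y_def t_def inner_diff_right ones_vec_inner_self)
  have "x \<bullet> (sdp_matrix \<alpha> (\<alpha>^2) *v x) = y \<bullet> (sdp_matrix \<alpha> (\<alpha>^2) *v y)"
    unfolding y_def quadratic_form_shift_kernel[OF symmetric_sdp_matrix sdp_matrix_ones] ..
  also have "\<dots> = y \<bullet> y - 2 * \<alpha> * (y \<bullet> (Lbar *v y)) + \<alpha>^2 * (y \<bullet> (Lquad *v y))"
    using y by (simp add: sdp_matrix_quadratic_form)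
  also have "\<dots> \<le> c * (y \<bullet> y)"
  proof -
    have "2 * \<alpha> * (\<mu> * (y \<bullet> y)) \<le> 2 * \<alpha> * (y \<bullet> (Lbar *v y))"
      using \<mu>[OF y] assms(2) by (intro mult_left_mono) auto
    moreover have "\<alpha>^2 * (y \<bullet> (Lquad *v y)) \<le> \<alpha>^2 * (onorm ((*v) Lquad) * (y \<bullet> y))"
      using quadratic_form_le_onorm[of y Lquad]
      by (intro mult_left_mono) (auto simp: power2_norm_eq_inner)
    ultimately show ?thesis by (simp add: c_def algebra_simps)
  qed
  also have "\<dots> \<le> max c 0 * (y \<bullet> y)" by (intro mult_right_mono) auto
  also have "\<dots> \<le> max c 0 * (x \<bullet> x)"
  proof -
    have "x = y + t *\<^sub>R ones_vec" by (simp add: y_def)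
    hence "x \<bullet> x = y \<bullet> y + t^2 * real CARD('n)"
      using y by (simp add: inner_add_left inner_add_right ones_vec_inner_self
          power2_eq_square inner_commute)
    thus ?thesis by (intro mult_left_mono) auto
  qed
  finally show "x \<bullet> (sdp_matrix \<alpha> (\<alpha>^2) *v x) \<le> max c 0 * (norm x)^2"
    by (simp add: power2_norm_eq_inner)
qed

lemma rate_less_one_near_zero:
  assumes "\<And>x. Lbar *v x = 0 \<Longrightarrow> x \<in> span {ones_vec}"
  shows "\<exists>a b. a < b \<and> (\<forall>\<alpha>\<in>{a<..<b}. rate \<alpha> < 1)"
proof -
  obtain \<mu> where \<mu>: "0 < \<mu>" "\<And>y. ones_vec \<bullet> y = 0 \<Longrightarrow> \<mu> * (y \<bullet> y) \<le> y \<bullet> (Lbar *v y)"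
    using psd_coercive_on_orthogonal_complement[OF symmetric_Lbar psd_Lbar assms] by blast
  define K where "K = onorm ((*v) Lquad)"
  have K: "0 \<le> K" unfolding K_def by (rule onorm_pos_le[OF matrix_vector_mul_bounded_linear])
  define b where "b = 2 * \<mu> / (K + 1)"
  have "0 < b" using \<mu>(1) K by (simp add: b_def)
  moreover have "rate \<alpha> < 1" if "0 < \<alpha>" "\<alpha> < b" for \<alpha>
  proof -
    have "\<alpha> * (K + 1) < 2 * \<mu>"
      using that(2) K by (simp add: b_def less_divide_eq add_nonneg_pos)
    hence "\<alpha> * K < 2 * \<mu>" using that(1) by (simp add: distrib_left)
    hence "1 - 2 * \<alpha> * \<mu> + \<alpha>^2 * K < 1"
      using that(1) by (simp add: power2_eq_square algebra_simps)
    thus ?thesis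
      using rate_le_if_coercive[OF \<mu>(2), of \<alpha>] that(1) by (simp add: K_def)
  qed
  ultimately show ?thesis by (intro exI[of _ 0] exI[of _ b]) auto
qed

end

lemma matcha_setup_matchings:
  assumes "\<And>j. j < M \<Longrightarrow> graph_edges (Es j)" "\<And>j. j < M \<Longrightarrow> is_matching (Es j)"
    and "\<And>j. j < M \<Longrightarrow> 0 \<le> p j \<and> p j \<le> 1"
  shows "matcha_setup M (\<lambda>j. laplacian (Es j)) p"
proof
  fix j x assume j: "j < M"
  show "symmetric_matrix (laplacian (Es j))"
    by (simp add: laplacian_eq_weighted_laplacian[OF assms(1)[OF j]] symmetric_weighted_laplacian
        adjacency_sym)
  show "0 \<le> x \<bullet> (laplacian (Es j) *v x)"
    by (simp add: laplacian_eq_weighted_laplacian[OF assms(1)[OF j]] weighted_laplacian_psd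
        adjacency_sym adjacency_nonneg)
  show "laplacian (Es j) *v ones_vec = 0"
    by (simp add: laplacian_eq_weighted_laplacian[OF assms(1)[OF j]] weighted_laplacian_ones)
  show "laplacian (Es j) ** laplacian (Es j) = 2 *\<^sub>R laplacian (Es j)"
    by (rule laplacian_matching_square[OF assms(1,2)[OF j]])
  show "0 \<le> p j \<and> p j \<le> 1" by (rule assms(3)[OF j])
qed

lemma kernel_sum_laplacians_connected:
  fixes M :: nat
  assumes "\<And>j. j < M \<Longrightarrow> graph_edges (Es j)" "connected_graph (\<Union>j<M. Es j)" "0 < c"
    and "(\<Sum>j<M. c *\<^sub>R laplacian (Es j)) *v x = 0"
  shows "x \<in> span {ones_vec}"
proof -
  define w where "w i k = (\<Sum>j<M. c * adjacency (Es j) i k)" for i k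
  have "(\<Sum>j<M. c *\<^sub>R laplacian (Es j)) = (\<Sum>j<M. c *\<^sub>R weighted_laplacian (adjacency (Es j)))"
    using laplacian_eq_weighted_laplacian[OF assms(1)] by simp
  also have "\<dots> = weighted_laplacian w"
    unfolding w_def by (rule weighted_laplacian_sum[where c = "\<lambda>_. c"]) simp
  finally have L: "(\<Sum>j<M. c *\<^sub>R laplacian (Es j)) = weighted_laplacian w" .
  have pos: "0 < w a b" if ab: "{a, b} \<in> (\<Union>j<M. Es j)" "a \<noteq> b" for a b
  proof -
    obtain j where j: "j < M" "{a, b} \<in> Es j" using ab(1) by blast
    have "c * adjacency (Es j) a b \<le> w a b"
      unfolding w_def using j assms(3)
      by (intro member_le_sum) (auto intro!: mult_nonneg_nonneg adjacency_nonneg)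
    thus ?thesis using ab(2) j assms(3) by (simp add: adjacency_def)
  qed
  have sym: "w i k = w k i" for i k by (simp add: w_def adjacency_sym)
  have nonneg: "0 \<le> w i k" for i k
    unfolding w_def using assms(3) by (intro sum_nonneg mult_nonneg_nonneg adjacency_nonneg) simp
  have ker: "weighted_laplacian w *v x = 0" using assms(4) L by simp
  show ?thesis
    using weighted_laplacian_kernel_connected[OF sym nonneg assms(2) pos ker] .
qed

lemma kernel_optimal_expected_laplacian:
  fixes M :: nat
  assumes edges: "\<And>j. j < M \<Longrightarrow> graph_edges (Es j)"
    and matchings: "\<And>j. j < M \<Longrightarrow> is_matching (Es j)"
    and "connected_graph (\<Union>j<M. Es j)" "0 < Cb" "matcha_optimal M (\<lambda>j. laplacian (Es j)) Cb p"
    and ker: "(\<Sum>j<M. p j *\<^sub>R laplacian (Es j)) *v x = 0"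
  shows "x \<in> span {ones_vec}"
proof -
  have p: "matcha_feasible M Cb p" and opt: "\<And>q. matcha_feasible M Cb q \<Longrightarrow>
      lambda2 (\<Sum>j<M. q j *\<^sub>R laplacian (Es j)) \<le> lambda2 (\<Sum>j<M. p j *\<^sub>R laplacian (Es j))"
    using assms(5) unfolding matcha_optimal_def by auto
  interpret P: matcha_setup M "\<lambda>j. laplacian (Es j)" p
    using p by (intro matcha_setup_matchings edges matchings) (auto simp: matcha_feasible_def)
  define c where "c = min 1 Cb"
  have c: "0 < c" "c \<le> 1" "c \<le> Cb" using assms(4) by (auto simp: c_def)
  have uniform: "matcha_feasible M Cb (\<lambda>_. c)"
    using c mult_right_mono[OF c(3), of "real M"] by (simp add: matcha_feasible_def mult.commute)
  interpret U: matcha_setup M "\<lambda>j. laplacian (Es j)" "\<lambda>_. c"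
    using c by (intro matcha_setup_matchings edges matchings) auto
  show ?thesis
  proof (rule kernel_subset_span_if_lambda2_le[OF U.symmetric_Lbar U.psd_Lbar U.Lbar_ones
        P.symmetric_Lbar P.psd_Lbar P.Lbar_ones ones_vec_neq_0])
    show "lambda2 U.Lbar \<le> lambda2 P.Lbar"
      unfolding U.Lbar_def P.Lbar_def by (rule opt[OF uniform])
    show "y \<in> span {ones_vec}" if "U.Lbar *v y = 0" for y
      using that edges assms(3) c(1) unfolding U.Lbar_def
      by (intro kernel_sum_laplacians_connected[of M Es]) auto
    show "P.Lbar *v x = 0" using ker unfolding P.Lbar_def .
  qed
qed

theorem theorem1:
  fixes E :: "('n::finite) set set"
    and Es :: "nat \<Rightarrow> 'n set set"
    and M :: nat and Cb :: real and p :: "nat \<Rightarrow> real"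
  assumes "graph_edges E"
    and "connected_graph E"
    and "\<forall>j<M. is_matching (Es j)"
    and "E = (\<Union>j<M. Es j)"
    and "\<forall>i<M. \<forall>j<M. i \<noteq> j \<longrightarrow> Es i \<inter> Es j = {}"
    and "Cb > 0"
    and "matcha_optimal M (\<lambda>j. laplacian (Es j)) Cb p"
  shows "(\<exists>a b. a < b \<and>
            (\<forall>\<alpha>\<in>{a<..<b}. matcha_rho M (\<lambda>j. laplacian (Es j)) p \<alpha> < 1))
       \<and> (\<exists>r \<alpha> \<beta>. sdp_optimal M (\<lambda>j. laplacian (Es j)) p r \<alpha> \<beta>)
       \<and> (\<forall>r \<alpha> \<beta>. sdp_optimal M (\<lambda>j. laplacian (Es j)) p r \<alpha> \<beta> \<longrightarrow>
            matcha_rho M (\<lambda>j. laplacian (Es j)) p \<alpha> = r \<and>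
            (\<forall>\<alpha>'. matcha_rho M (\<lambda>j. laplacian (Es j)) p \<alpha>
                     \<le> matcha_rho M (\<lambda>j. laplacian (Es j)) p \<alpha>'))"
proof -
  have edges: "graph_edges (Es j)" if "j < M" for j
    using assms(1,4) that unfolding graph_edges_def by blast
  have "matcha_feasible M Cb p" using assms(7) by (simp add: matcha_optimal_def)
  then interpret matcha_setup M "\<lambda>j. laplacian (Es j)" p
    using assms(3) by (intro matcha_setup_matchings edges) (auto simp: matcha_feasible_def)
  have "x \<in> span {ones_vec}" if "Lbar *v x = 0" for x
    using assms(2-4,6,7) edges that unfolding Lbar_def
    by (intro kernel_optimal_expected_laplacian[of M Es Cb p]) auto
  thus ?thesis
    unfolding matcha_rho_eq_rate
    using rate_less_one_near_zero sdp_optimal_exists sdp_optimal_imp_rate_min by blast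
qed

end
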